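(* Let $(X_1,X_2)$ and $(Y_1,Y_2)$ be two pairs of compatible complex Banach spaces such that $X_1\cap X_2$ is dense in both $X_1$ and $X_2$, $Y_1\cap Y_2$ is dense in both $Y_1$ and $Y_2$, and $Y_2$ is reflexive. Let $O\subseteq\mathbb{C}$ be open and $f:O\to\mathcal L(X_1,Y_1)$ holomorphic. If there is $C<\infty$ with $$\|f(z)x\|_{Y_2}\le C\|x\|_{X_2}\qquad(z\in O,\ x\in X_1\cap X_2),$$ then each $f(z)$ extends from $X_1\cap X_2$ to a bounded operator $X_2\to Y_2$ (also denoted $f(z)$), and $f:O\to\mathcal L(X_2,Y_2)$ is holomorphic.
   Context: Two Banach spaces are called compatible if they are both continuously included in the same Hausdorff topological vector space. Holomorphy of operator-valued maps is with respect to the operator norm. *)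

theory Defs
  imports "HOL-Analysis.Analysis"
begin

class scaleC = scaleR +
  fixes scaleC :: "complex \<Rightarrow> 'a \<Rightarrow> 'a"
  assumes scaleR_scaleC: "scaleR r x = scaleC (of_real r) x"

class complex_vector = scaleC + real_vector +
  assumes scaleC_add_right: "scaleC a (x + y) = scaleC a x + scaleC a y"
    and scaleC_add_left: "scaleC (a + b) x = scaleC a x + scaleC b x"
    and scaleC_scaleC: "scaleC a (scaleC b x) = scaleC (a * b) x"
    and scaleC_one: "scaleC 1 x = x"

class complex_normed_vector = complex_vector + real_normed_vector +
  assumes norm_scaleC: "norm (scaleC a x) = cmod a * norm x"

class complex_banach = complex_normed_vector + complete_space

definition complex_tvs :: "'a::{complex_vector, t2_space} itself \<Rightarrow> bool" where
  "complex_tvs _ \<longleftrightarrow>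
     continuous_on UNIV (\<lambda>p::'a \<times> 'a. fst p + snd p) \<and>
     continuous_on UNIV (\<lambda>p::complex \<times> 'a. scaleC (fst p) (snd p))"

instantiation complex :: complex_banach
begin
definition scaleC_complex_def: "scaleC (a::complex) (x::complex) = a * x"
instance
  by standard (auto simp: scaleC_complex_def scaleR_conv_of_real algebra_simps norm_mult)
end

definition clinear :: "('a::complex_vector \<Rightarrow> 'b::complex_vector) \<Rightarrow> bool" where
  "clinear f \<longleftrightarrow> (\<forall>x y. f (x + y) = f x + f y) \<and> (\<forall>c x. f (scaleC c x) = scaleC c (f x))"

definition cdual :: "'a::complex_normed_vector itself \<Rightarrow> ('a \<Rightarrow> complex) set" where
  "cdual _ = {\<phi>. clinear \<phi> \<and> bounded_linear \<phi>}"

text \<open>Reflexivity: the canonical embedding into the bidual is surjective, i.e. every bounded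
  complex-linear functional on the dual is evaluation at some point.\<close>
definition creflexive :: "'a::complex_normed_vector itself \<Rightarrow> bool" where
  "creflexive T \<longleftrightarrow>
     (\<forall>\<Phi> :: ('a \<Rightarrow> complex) \<Rightarrow> complex.
        ((\<forall>\<phi>\<in>cdual T. \<forall>\<psi>\<in>cdual T. \<Phi> (\<lambda>y. \<phi> y + \<psi> y) = \<Phi> \<phi> + \<Phi> \<psi>) \<and>
         (\<forall>\<phi>\<in>cdual T. \<forall>c. \<Phi> (\<lambda>y. c * \<phi> y) = c * \<Phi> \<phi>) \<and>
         (\<exists>K. \<forall>\<phi>\<in>cdual T. cmod (\<Phi> \<phi>) \<le> K * onorm \<phi>))
        \<longrightarrow> (\<exists>y. \<forall>\<phi>\<in>cdual T. \<Phi> \<phi> = \<phi> y))"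

definition cscale_blinfun :: "complex \<Rightarrow> ('a::complex_normed_vector \<Rightarrow>\<^sub>L 'b::complex_normed_vector)
    \<Rightarrow> ('a \<Rightarrow>\<^sub>L 'b)" where
  "cscale_blinfun c T = Blinfun (\<lambda>x. scaleC c (blinfun_apply T x))"

definition op_holomorphic_on ::
  "(complex \<Rightarrow> ('a::complex_normed_vector \<Rightarrow>\<^sub>L 'b::complex_normed_vector)) \<Rightarrow> complex set \<Rightarrow> bool" where
  "op_holomorphic_on f U \<longleftrightarrow>
     (\<forall>z\<in>U. \<exists>D. clinear (blinfun_apply D) \<and>
        ((\<lambda>w. norm (f w - f z - cscale_blinfun (w - z) D) / cmod (w - z)) \<longlongrightarrow> 0) (at z))"

text \<open>Compatible pair: both spaces continuously (complex-linearly, injectively) included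
  in a common Hausdorff topological vector space.\<close>
definition continuous_inclusion :: "('a::complex_banach \<Rightarrow> 'v::{complex_vector,t2_space}) \<Rightarrow> bool" where
  "continuous_inclusion j \<longleftrightarrow> clinear j \<and> inj j \<and> continuous_on UNIV j"

end

theory Submission
  imports Defs "HOL-Complex_Analysis.Complex_Analysis"
begin

text \<open>For x in X1 \<inter> X2 the hypothesis bounds the Y2-norm of f(z)x by C times the X2-norm of x, so by
  density of X1 \<inter> X2 in X2 each f(z) extends to g(z) in L(X2,Y2) with norm at most C.
  Since Y2 is reflexive and g is bounded, holomorphy of g follows from holomorphy of all the
  scalar functions z \<mapsto> \<psi>(g(z)x), \<psi> in the dual of Y2: Cauchy's estimates produce weak derivatives,
  reflexivity turns them into an operator, and Cauchy's estimates for the power series bound the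
  remainder quadratically.  The functionals \<psi> that agree on Y1 \<inter> Y2 with some \<theta> in the dual of Y1
  are norm dense in the dual of Y2, by a Hahn--Banach argument in Y1 \<times> Y2 combined with
  reflexivity.  For such \<psi> and x in X1 \<inter> X2 the function \<psi>(g(z)x) = \<theta>(f(z)x) is holomorphic, and
  the general case follows by uniform approximation.\<close>

section \<open>Complex-linear maps and the complex dual\<close>

lemma scaleC_complex [simp]: "scaleC c (z :: complex) = c * z"
  by (simp add: scaleC_complex_def)

lemma scaleC_minus_one: "scaleC (-1) (x::'a::complex_vector) = - x"
  by (metis of_real_1 of_real_minus scaleR_minus1_left scaleR_scaleC)

lemma scaleC_scaleR_commute: "scaleC c (scaleR r (x::'a::complex_vector)) = scaleR r (scaleC c x)"
  by (simp add: scaleR_scaleC scaleC_scaleC mult.commute)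

lemma scaleC_Re_Im: "scaleC c (x::'a::complex_vector) = Re c *\<^sub>R x + Im c *\<^sub>R scaleC \<i> x"
proof -
  have "complex_of_real (Re c) + complex_of_real (Im c) * \<i> = c"
    by (simp add: complex_eq_iff)
  then have "scaleC c x = scaleC (complex_of_real (Re c) + complex_of_real (Im c) * \<i>) x"
    by simp
  also have "\<dots> = Re c *\<^sub>R x + Im c *\<^sub>R scaleC \<i> x"
    by (simp add: scaleC_add_left scaleR_scaleC scaleC_scaleC)
  finally show ?thesis .
qed

lemma linear_scaleC: "linear (scaleC c :: 'a::complex_vector \<Rightarrow> 'a)"
  by (rule linearI) (simp_all add: scaleC_add_right scaleC_scaleR_commute)

lemma scaleC_zero_right [simp]: "scaleC c (0::'a::complex_vector) = 0"
  using linear_0[OF linear_scaleC] .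

lemma bounded_linear_scaleC: "bounded_linear (scaleC c :: 'a::complex_normed_vector \<Rightarrow> 'a)"
  by (rule bounded_linear_intro[where K="cmod c"])
    (simp_all add: scaleC_add_right scaleC_scaleR_commute norm_scaleC mult.commute)

lemma clinear_add: "clinear f \<Longrightarrow> f (x + y) = f x + f y"
  by (simp add: clinear_def)

lemma clinear_scaleC: "clinear f \<Longrightarrow> f (scaleC c x) = scaleC c (f x)"
  by (simp add: clinear_def)

lemma clinear_imp_linear: "clinear f \<Longrightarrow> linear f"
  unfolding clinear_def by (intro linearI) (simp_all add: scaleR_scaleC)

lemma clinear_0: "clinear f \<Longrightarrow> f 0 = 0"
  using clinear_imp_linear linear_0 by blast

lemma clinear_diff: "clinear f \<Longrightarrow> f (x - y) = f x - f y"
  using clinear_imp_linear linear_diff by blast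

lemma clinearI_linear:
  fixes f :: "'a::complex_vector \<Rightarrow> 'b::complex_vector"
  assumes "linear f" "\<And>x. f (scaleC \<i> x) = scaleC \<i> (f x)"
  shows "clinear f"
  unfolding clinear_def
proof (intro conjI allI)
  fix x y show "f (x + y) = f x + f y" using assms(1) by (simp add: linear_add)
next
  fix c x show "f (scaleC c x) = scaleC c (f x)"
    using assms by (simp add: scaleC_Re_Im[of c x] scaleC_Re_Im[of c "f x"] linear_add linear_scale)
qed

lemma cdual_iff: "\<phi> \<in> cdual T \<longleftrightarrow> clinear \<phi> \<and> bounded_linear \<phi>"
  by (simp add: cdual_def)

lemma cdualI:
  fixes \<phi> :: "'a::complex_normed_vector \<Rightarrow> complex"
  assumes "linear \<phi>" "\<And>x. \<phi> (scaleC \<i> x) = \<i> * \<phi> x" "\<And>x. cmod (\<phi> x) \<le> K * norm x"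
  shows "\<phi> \<in> cdual TYPE('a)"
  using assms clinearI_linear[of \<phi>] unfolding cdual_iff
  by (auto intro!: bounded_linear_intro[where K=K] simp: linear_add linear_scale mult.commute)

lemma cdual_add: "\<phi> \<in> cdual T \<Longrightarrow> \<phi> (a + b) = \<phi> a + \<phi> b"
  by (simp add: cdual_iff clinear_add)

lemma cdual_diff: "\<phi> \<in> cdual T \<Longrightarrow> \<phi> (a - b) = \<phi> a - \<phi> b"
  by (simp add: cdual_iff clinear_diff)

lemma cdual_scaleC: "\<phi> \<in> cdual T \<Longrightarrow> \<phi> (scaleC c a) = c * \<phi> a"
  by (simp add: cdual_iff clinear_scaleC)

lemma cdual_norm_le: "\<phi> \<in> cdual T \<Longrightarrow> cmod (\<phi> a) \<le> onorm \<phi> * norm a"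
  by (simp add: cdual_iff onorm)

lemma cdual_onorm_nonneg: "\<phi> \<in> cdual T \<Longrightarrow> 0 \<le> onorm \<phi>"
  by (simp add: cdual_iff onorm_pos_le)

lemma blinfun_apply_Blinfun_cdual: "\<phi> \<in> cdual T \<Longrightarrow> blinfun_apply (Blinfun \<phi>) = \<phi>"
  by (simp add: cdual_iff bounded_linear_Blinfun_apply)

lemma cdual_zero_mem: "(\<lambda>x. 0) \<in> cdual T"
  by (simp add: cdual_iff clinear_def)

lemma cdual_add_mem: "\<phi> \<in> cdual T \<Longrightarrow> \<psi> \<in> cdual T \<Longrightarrow> (\<lambda>y. \<phi> y + \<psi> y) \<in> cdual T"
  unfolding cdual_iff clinear_def by (auto intro: bounded_linear_add simp: algebra_simps)

lemma cdual_mult_mem: "\<phi> \<in> cdual T \<Longrightarrow> (\<lambda>y. c * \<phi> y) \<in> cdual T"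
  unfolding cdual_iff clinear_def
  by (auto intro: bounded_linear_compose[OF bounded_linear_mult_right] simp: algebra_simps)

lemma cscale_blinfun_apply: "blinfun_apply (cscale_blinfun c T) x = scaleC c (blinfun_apply T x)"
  unfolding cscale_blinfun_def
  by (simp add: bounded_linear_Blinfun_apply
      bounded_linear_compose[OF bounded_linear_scaleC blinfun.bounded_linear_right])

section \<open>Hahn--Banach for dominated graphs\<close>

definition dominated_graph :: "real \<Rightarrow> ('a::real_normed_vector \<times> real) set \<Rightarrow> bool" where
  "dominated_graph K G \<longleftrightarrow> subspace G \<and> (\<forall>x a b. (x,a) \<in> G \<longrightarrow> (x,b) \<in> G \<longrightarrow> a = b)
     \<and> (\<forall>x a. (x,a) \<in> G \<longrightarrow> a \<le> K * norm x)"

lemma dominated_graph_scaleR: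
  "dominated_graph K G \<Longrightarrow> (d,a) \<in> G \<Longrightarrow> (r *\<^sub>R d, r * a) \<in> G"
  using subspace_scale[of G "(d,a)" r] by (simp add: dominated_graph_def)

lemma dominated_graph_insert_bound:
  fixes G :: "('a::real_normed_vector \<times> real) set"
  assumes G: "dominated_graph K G"
    and c: "\<And>d a. (d,a) \<in> G \<Longrightarrow> a - K * norm (d - v) \<le> c \<and> c \<le> K * norm (d + v) - a"
    and de: "(d,e) \<in> G"
  shows "t * c + e \<le> K * norm (t *\<^sub>R v + d)"
proof -
  consider "t = 0" | "t > 0" | "t < 0" by linarith
  then show ?thesis
  proof cases
    case 1
    then show ?thesis using G de by (simp add: dominated_graph_def)
  next
    case 2
    have "c \<le> K * norm ((1/t) *\<^sub>R d + v) - (1/t) * e"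
      using c[OF dominated_graph_scaleR[OF G de, of "1/t"]] by simp
    then have "t * c \<le> t * (K * norm ((1/t) *\<^sub>R d + v) - (1/t) * e)"
      using 2 by simp
    also have "\<dots> = K * (t * norm ((1/t) *\<^sub>R d + v)) - e"
      using 2 by (simp add: algebra_simps)
    also have "t * norm ((1/t) *\<^sub>R d + v) = norm (t *\<^sub>R ((1/t) *\<^sub>R d + v))"
      using 2 by simp
    also have "t *\<^sub>R ((1/t) *\<^sub>R d + v) = t *\<^sub>R v + d"
      using 2 by (simp add: scaleR_add_right add.commute)
    finally show ?thesis by simp
  next
    case 3
    define s where "s = -t"
    have s: "s > 0" using 3 s_def by simp
    have "(1/s) * e - K * norm ((1/s) *\<^sub>R d - v) \<le> c"
      using c[OF dominated_graph_scaleR[OF G de, of "1/s"]] by simp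
    then have "s * ((1/s) * e - K * norm ((1/s) *\<^sub>R d - v)) \<le> s * c"
      using s by simp
    then have "e - K * (s * norm ((1/s) *\<^sub>R d - v)) \<le> s * c"
      using s by (simp add: algebra_simps)
    also have "s * norm ((1/s) *\<^sub>R d - v) = norm (s *\<^sub>R ((1/s) *\<^sub>R d - v))"
      using s by simp
    also have "s *\<^sub>R ((1/s) *\<^sub>R d - v) = t *\<^sub>R v + d"
      using s unfolding s_def by (simp add: scaleR_diff_right)
    finally show ?thesis unfolding s_def by (simp add: algebra_simps)
  qed
qed

lemma dominated_graph_span_insert:
  fixes G :: "('a::real_normed_vector \<times> real) set"
  assumes G: "dominated_graph K G" and v: "v \<notin> fst ` G"
    and c: "\<And>d a. (d,a) \<in> G \<Longrightarrow> a - K * norm (d - v) \<le> c \<and> c \<le> K * norm (d + v) - a"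
  shows "dominated_graph K (span (insert (v,c) G))"
proof -
  have sG: "subspace G" and fG: "\<And>x a b. (x,a) \<in> G \<Longrightarrow> (x,b) \<in> G \<Longrightarrow> a = b"
    using G by (auto simp: dominated_graph_def)
  have mem: "\<exists>t d e. (d,e) \<in> G \<and> x = t *\<^sub>R v + d \<and> a = t * c + e"
    if "(x,a) \<in> span (insert (v,c) G)" for x a
  proof -
    from that obtain t where "(x,a) - t *\<^sub>R (v,c) \<in> G"
      unfolding span_insert span_eq_iff[THEN iffD2, OF sG] by auto
    then show ?thesis by (intro exI[of _ t] exI[of _ "x - t *\<^sub>R v"] exI[of _ "a - t * c"]) auto
  qed
  show ?thesis unfolding dominated_graph_def
  proof (intro conjI allI impI)
    show "subspace (span (insert (v, c) G))" by (rule subspace_span)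
  next
    fix x a b assume "(x,a) \<in> span (insert (v, c) G)" "(x,b) \<in> span (insert (v, c) G)"
    then have "(0, a - b) \<in> span (insert (v, c) G)" using span_diff by fastforce
    from mem[OF this] obtain t d e where de: "(d,e) \<in> G" and d: "0 = t *\<^sub>R v + d"
      and ab: "a - b = t * c + e" by blast
    show "a = b"
    proof (cases "t = 0")
      case True
      then have "(0, a - b) \<in> G" using de d ab by simp
      moreover have "(0, 0) \<in> G" using subspace_0[OF sG] by (simp add: zero_prod_def)
      ultimately show ?thesis using fG by force
    next
      case False
      have "d = - (t *\<^sub>R v)" using d by (simp add: eq_neg_iff_add_eq_0 add.commute)
      then have "(-(1/t)) *\<^sub>R d = v" using False by simp
      then have "v \<in> fst ` G" using dominated_graph_scaleR[OF G de, of "-(1/t)"] by force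
      with v show ?thesis by simp
    qed
  next
    fix x a assume "(x,a) \<in> span (insert (v, c) G)"
    with mem dominated_graph_insert_bound[OF G c] show "a \<le> K * norm x" by blast
  qed
qed

lemma dominated_graph_lower_le_upper:
  fixes G :: "('a::real_normed_vector \<times> real) set"
  assumes G: "dominated_graph K G" and K: "K \<ge> 0" and "(d1,a1) \<in> G" "(d2,a2) \<in> G"
  shows "a1 - K * norm (d1 - v) \<le> K * norm (d2 + v) - a2"
proof -
  have "(d1 + d2, a1 + a2) \<in> G"
    using subspace_add[of G "(d1,a1)" "(d2,a2)"] G assms(3,4) by (simp add: dominated_graph_def)
  then have "a1 + a2 \<le> K * norm ((d1 - v) + (d2 + v))" using G by (simp add: dominated_graph_def)
  also have "\<dots> \<le> K * (norm (d1 - v) + norm (d2 + v))" using K by (intro mult_left_mono norm_triangle_ineq)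
  finally show ?thesis by (simp add: algebra_simps)
qed

lemma dominated_graph_extension_exists:
  fixes G :: "('a::real_normed_vector \<times> real) set"
  assumes G: "dominated_graph K G" and v: "v \<notin> fst ` G" and K: "K \<ge> 0"
  shows "\<exists>c. dominated_graph K (span (insert (v,c) G))"
proof -
  define A where "A = {a - K * norm (d - v) | d a. (d,a) \<in> G}"
  have "(0,0) \<in> G" using subspace_0[of G] G by (simp add: dominated_graph_def zero_prod_def)
  then have "A \<noteq> {}" unfolding A_def by blast
  have "bdd_above A"
    using dominated_graph_lower_le_upper[OF G K _ \<open>(0,0) \<in> G\<close>] unfolding A_def bdd_above_def by blast
  have "dominated_graph K (span (insert (v, Sup A) G))"
  proof (rule dominated_graph_span_insert[OF G v])
    fix d a assume da: "(d,a) \<in> G"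
    then have "a - K * norm (d - v) \<in> A" unfolding A_def by blast
    then have "a - K * norm (d - v) \<le> Sup A" using \<open>bdd_above A\<close> by (rule cSup_upper)
    moreover have "Sup A \<le> K * norm (d + v) - a"
      using \<open>A \<noteq> {}\<close> dominated_graph_lower_le_upper[OF G K _ da] unfolding A_def by (auto intro!: cSup_least)
    ultimately show "a - K * norm (d - v) \<le> Sup A \<and> Sup A \<le> K * norm (d + v) - a" ..
  qed
  then show ?thesis by blast
qed

lemma dominated_graph_chain_Union:
  assumes ne: "\<C> \<noteq> {}" and ch: "subset.chain {G. dominated_graph K G \<and> G0 \<subseteq> G} \<C>"
  shows "dominated_graph K (\<Union>\<C>) \<and> G0 \<subseteq> \<Union>\<C>"
proof -
  have C: "\<And>G. G \<in> \<C> \<Longrightarrow> dominated_graph K G \<and> G0 \<subseteq> G" and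
    tot: "\<And>X Y. X \<in> \<C> \<Longrightarrow> Y \<in> \<C> \<Longrightarrow> X \<subseteq> Y \<or> Y \<subseteq> X"
    using ch unfolding subset_chain_def by blast+
  have common: "\<exists>G\<in>\<C>. p \<in> G \<and> q \<in> G" if P: "p \<in> \<Union>\<C>" "q \<in> \<Union>\<C>" for p q
  proof -
    obtain X Y where "X\<in>\<C>" "Y\<in>\<C>" "p\<in>X" "q\<in>Y" using P by blast
    then show ?thesis using tot[of X Y] by blast
  qed
  obtain G1 where G1: "G1 \<in> \<C>" using ne by blast
  have "subspace (\<Union>\<C>)" unfolding subspace_def
  proof (intro conjI ballI allI)
    show "0 \<in> \<Union>\<C>" using C[OF G1] G1 subspace_0[of G1] unfolding dominated_graph_def by blast
  next
    fix p q assume "p \<in> \<Union>\<C>" "q \<in> \<Union>\<C>"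
    then obtain G where "G\<in>\<C>" "p\<in>G" "q\<in>G" using common by blast
    then show "p + q \<in> \<Union>\<C>" using C[of G] subspace_add[of G p q] unfolding dominated_graph_def by blast
  next
    fix c :: real and p assume "p \<in> \<Union>\<C>"
    then obtain G where "G\<in>\<C>" "p\<in>G" by blast
    then show "c *\<^sub>R p \<in> \<Union>\<C>" using C[of G] subspace_scale[of G p c] unfolding dominated_graph_def by blast
  qed
  moreover have "a = b" if P: "(x,a) \<in> \<Union>\<C>" "(x,b) \<in> \<Union>\<C>" for x a b
  proof -
    obtain G where "G\<in>\<C>" "(x,a)\<in>G" "(x,b)\<in>G" using common[OF P] by blast
    then show ?thesis using C[of G] unfolding dominated_graph_def by blast
  qed
  moreover have "a \<le> K * norm x" if "(x,a) \<in> \<Union>\<C>" for x a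
    using that C unfolding dominated_graph_def by blast
  moreover have "G0 \<subseteq> \<Union>\<C>" using C[OF G1] G1 by blast
  ultimately show ?thesis unfolding dominated_graph_def by blast
qed

lemma dominated_graph_maximal_exists:
  fixes G0 :: "('a::real_normed_vector \<times> real) set"
  assumes G0: "dominated_graph K G0" and K: "K \<ge> 0"
  obtains M where "dominated_graph K M" "G0 \<subseteq> M" "\<And>x. \<exists>a. (x,a) \<in> M"
proof -
  define \<A> where "\<A> = {G. dominated_graph K G \<and> G0 \<subseteq> G}"
  have "\<exists>M\<in>\<A>. \<forall>X\<in>\<A>. M \<subseteq> X \<longrightarrow> X = M"
  proof (rule subset_Zorn_nonempty)
    show "\<A> \<noteq> {}" using G0 unfolding \<A>_def by blast
    fix \<C> assume "\<C> \<noteq> {}" "subset.chain \<A> \<C>"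
    then show "\<Union>\<C> \<in> \<A>" using dominated_graph_chain_Union[of \<C> K G0] unfolding \<A>_def by blast
  qed
  then obtain M where "M \<in> \<A>" and max_\<A>: "\<forall>X\<in>\<A>. M \<subseteq> X \<longrightarrow> X = M" by blast
  then have M: "dominated_graph K M" "G0 \<subseteq> M" unfolding \<A>_def by auto
  have "\<exists>a. (x,a) \<in> M" for x
  proof (rule ccontr)
    assume none: "\<nexists>a. (x, a) \<in> M"
    then have x: "x \<notin> fst ` M" by (auto simp: image_iff)
    obtain c where c: "dominated_graph K (span (insert (x,c) M))"
      using dominated_graph_extension_exists[OF M(1) x K] by blast
    have "M \<subseteq> span (insert (x,c) M)" using span_superset[of "insert (x,c) M"] by blast
    then have "span (insert (x,c) M) = M"
      using max_\<A> c M(2) unfolding \<A>_def by blast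
    then have "(x,c) \<in> M" using span_base[of "(x,c)" "insert (x,c) M"] by simp
    with none show False by blast
  qed
  then show ?thesis using M that by blast
qed

lemma Hahn_Banach_dominated_graph:
  fixes G0 :: "('a::real_normed_vector \<times> real) set"
  assumes G0: "dominated_graph K G0" and K: "K \<ge> 0"
  shows "\<exists>h. linear h \<and> (\<forall>x. h x \<le> K * norm x) \<and> (\<forall>x a. (x,a) \<in> G0 \<longrightarrow> h x = a)"
proof -
  obtain M where M: "dominated_graph K M" "G0 \<subseteq> M" and total: "\<And>x. \<exists>a. (x,a) \<in> M"
    using dominated_graph_maximal_exists[OF G0 K] by blast
  have sM: "subspace M" and fM: "\<And>x a b. (x,a) \<in> M \<Longrightarrow> (x,b) \<in> M \<Longrightarrow> a = b"
    and bM: "\<And>x a. (x,a) \<in> M \<Longrightarrow> a \<le> K * norm x" using M(1) by (auto simp: dominated_graph_def)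
  define h where "h x = (THE a. (x,a) \<in> M)" for x
  have h_eq: "h x = a" if "(x,a) \<in> M" for x a
    unfolding h_def using that fM by (intro the_equality) auto
  have hM: "(x, h x) \<in> M" for x
    using total[of x] h_eq by blast
  have "linear h"
  proof (rule linearI)
    fix x y show "h (x + y) = h x + h y"
      using h_eq[of "x + y" "h x + h y"] subspace_add[OF sM hM[of x] hM[of y]] by simp
  next
    fix r :: real and x show "h (r *\<^sub>R x) = r *\<^sub>R h x"
      using h_eq[of "r *\<^sub>R x" "r * h x"] subspace_scale[OF sM hM[of x], of r] by simp
  qed
  moreover have "h x \<le> K * norm x" for x using bM[OF hM] .
  moreover have "h x = a" if "(x,a) \<in> G0" for x a using h_eq that M(2) by blast
  ultimately show ?thesis by blast
qed

lemma separating_functional_real: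
  fixes M :: "'a::real_normed_vector set"
  assumes sM: "subspace M" and cM: "closed M" and v: "v \<notin> M"
  shows "\<exists>h. linear h \<and> h v = 1 \<and> (\<forall>m\<in>M. h m = 0) \<and> (\<forall>x. \<bar>h x\<bar> \<le> norm x / infdist v M)"
proof -
  have "M \<noteq> {}" using subspace_0[OF sM] by blast
  then have dpos: "infdist v M > 0" using infdist_pos_not_in_closed[OF cM _ v] by blast
  define K where "K = 1 / infdist v M"
  have K: "K \<ge> 0" using dpos K_def by simp
  define G where "G = (\<lambda>m. (m, 0::real)) ` M"
  have "linear (\<lambda>m. (m, 0::real))" by (rule linearI) (simp_all add: zero_prod_def)
  then have sG: "subspace G" unfolding G_def using sM by (rule linear_subspace_image)
  have G: "dominated_graph K G" unfolding dominated_graph_def using sG K by (auto simp: G_def)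
  have vG: "v \<notin> fst ` G" using v by (force simp: G_def)
  have "dominated_graph K (span (insert (v,1) G))"
  proof (rule dominated_graph_span_insert[OF G vG])
    fix d a assume "(d,a) \<in> G"
    then have a: "a = 0" and d: "d \<in> M" by (auto simp: G_def)
    have "-d \<in> M" using d sM by (simp add: subspace_neg)
    then have "infdist v M \<le> dist v (-d)" by (rule infdist_le)
    also have "dist v (-d) = norm (d + v)" by (simp add: dist_norm add.commute)
    finally have "infdist v M \<le> norm (d + v)" .
    then have "1 \<le> K * norm (d + v)" using dpos unfolding K_def by (simp add: divide_simps)
    moreover have "0 \<le> K * norm (d - v)" using K by simp
    ultimately show "a - K * norm (d - v) \<le> 1 \<and> 1 \<le> K * norm (d + v) - a" using a by simp
  qed
  from Hahn_Banach_dominated_graph[OF this K] obtain h where h: "linear h" "\<And>x. h x \<le> K * norm x"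
    "\<And>x a. (x,a) \<in> span (insert (v,1) G) \<Longrightarrow> h x = a" by blast
  have "h v = 1" using h(3)[of v 1] by (simp add: span_base)
  moreover have "\<forall>m\<in>M. h m = 0"
  proof
    fix m assume "m \<in> M"
    then have "(m,0) \<in> span (insert (v,1) G)" unfolding G_def by (intro span_base) blast
    then show "h m = 0" using h(3) by blast
  qed
  moreover have "\<bar>h x\<bar> \<le> norm x / infdist v M" for x
  proof -
    have "h (-x) = - h x" using h(1) by (simp add: linear_neg)
    then have "- h x \<le> K * norm x" using h(2)[of "-x"] by simp
    then show ?thesis using h(2)[of x] K_def by (simp add: abs_le_iff)
  qed
  ultimately show ?thesis using h(1) by blast
qed

text \<open>Stated for a real normed space with a complex structure J, since the spaces it is applied to
  (products and the blinfun dual) are not instances of \<open>complex_vector\<close>.\<close>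

lemma separating_functional_complex:
  fixes M :: "'a::real_normed_vector set" and J :: "'a \<Rightarrow> 'a"
  assumes sM: "subspace M" and cM: "closed M" and v: "v \<notin> M"
    and J: "linear J" "\<And>x. J (J x) = - x" "\<And>x. norm (J x) \<le> L * norm x" "\<And>m. m \<in> M \<Longrightarrow> J m \<in> M"
  shows "\<exists>\<phi>::'a \<Rightarrow> complex. linear \<phi> \<and> (\<forall>x. \<phi> (J x) = \<i> * \<phi> x) \<and> Re (\<phi> v) = 1 \<and>
           (\<forall>m\<in>M. \<phi> m = 0) \<and> (\<forall>x. cmod (\<phi> x) \<le> (1 + L) * norm x / infdist v M)"
proof -
  obtain h where h: "linear h" "h v = 1" "\<And>m. m\<in>M \<Longrightarrow> h m = 0" "\<And>x. \<bar>h x\<bar> \<le> norm x / infdist v M"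
    using separating_functional_real[OF sM cM v] by blast
  define \<phi> where "\<phi> x = Complex (h x) (- h (J x))" for x
  have hadd: "h (x + y) = h x + h y" and hsc: "h (r *\<^sub>R x) = r * h x" for x y r
    using h(1) by (simp_all add: linear_add linear_scale)
  have Jadd: "J (x + y) = J x + J y" and Jsc: "J (r *\<^sub>R x) = r *\<^sub>R J x" for x y r
    using J(1) by (simp_all add: linear_add linear_scale)
  have hneg: "h (- x) = - h x" for x using h(1) by (simp add: linear_neg)
  have "linear \<phi>"
  proof (rule linearI)
    fix x y show "\<phi> (x + y) = \<phi> x + \<phi> y" unfolding \<phi>_def by (simp add: hadd Jadd complex_eq_iff)
  next
    fix r :: real and x show "\<phi> (r *\<^sub>R x) = r *\<^sub>R \<phi> x" unfolding \<phi>_def by (simp add: hsc Jsc complex_eq_iff)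
  qed
  moreover have "\<phi> (J x) = \<i> * \<phi> x" for x unfolding \<phi>_def by (simp add: J(2) hneg complex_eq_iff)
  moreover have "Re (\<phi> v) = 1" unfolding \<phi>_def using h(2) by simp
  moreover have "\<phi> m = 0" if "m \<in> M" for m unfolding \<phi>_def using h(3) that J(4) by (simp add: complex_eq_iff)
  moreover have "cmod (\<phi> x) \<le> (1 + L) * norm x / infdist v M" for x
  proof -
    have d: "infdist v M \<ge> 0" by (rule infdist_nonneg)
    have "cmod (\<phi> x) \<le> \<bar>h x\<bar> + \<bar>h (J x)\<bar>"
      unfolding \<phi>_def using cmod_le[of "Complex (h x) (- h (J x))"] by simp
    also have "\<dots> \<le> norm x / infdist v M + norm (J x) / infdist v M" using h(4) by (intro add_mono) auto
    also have "norm (J x) / infdist v M \<le> L * norm x / infdist v M"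
      using J(3) d by (simp add: divide_right_mono)
    finally show ?thesis by (simp add: algebra_simps add_divide_distrib)
  qed
  ultimately show ?thesis by blast
qed

text \<open>The passage from a real to a complex functional costs the factor 2.\<close>

lemma norming_cdual:
  fixes y :: "'a::complex_normed_vector"
  obtains \<phi> where "\<phi> \<in> cdual TYPE('a)" "onorm \<phi> \<le> 2" "norm y \<le> cmod (\<phi> y)"
proof (cases "y = 0")
  case True
  then show ?thesis using that[OF cdual_zero_mem] by (simp add: onorm_zero)
next
  case False
  have J: "linear (scaleC \<i> :: 'a \<Rightarrow> 'a)" "\<And>x::'a. scaleC \<i> (scaleC \<i> x) = - x"
    "\<And>x::'a. norm (scaleC \<i> x) \<le> 1 * norm x" "\<And>m::'a. m \<in> {0} \<Longrightarrow> scaleC \<i> m \<in> {0}"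
    by (simp_all add: linear_scaleC scaleC_scaleC scaleC_minus_one norm_scaleC linear_0)
  from False have "y \<notin> {0}" by simp
  from separating_functional_complex[OF subspace_single_0 closed_singleton this J]
  obtain \<phi>0 :: "'a \<Rightarrow> complex" where \<phi>0: "linear \<phi>0" "\<And>x. \<phi>0 (scaleC \<i> x) = \<i> * \<phi>0 x"
    "Re (\<phi>0 y) = 1" "\<And>x. cmod (\<phi>0 x) \<le> (1 + 1) * norm x / infdist y {0}"
    by blast
  have ny: "norm y > 0" using False by simp
  define \<phi> where "\<phi> x = complex_of_real (norm y) * \<phi>0 x" for x
  have bound: "cmod (\<phi> x) \<le> 2 * norm x" for x
  proof -
    have "cmod (\<phi> x) = norm y * cmod (\<phi>0 x)" unfolding \<phi>_def by (simp add: norm_mult)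
    also have "\<dots> \<le> norm y * (2 * norm x / norm y)"
      using \<phi>0(4)[of x] by (intro mult_left_mono) (auto simp: infdist_singleton dist_norm)
    also have "\<dots> = 2 * norm x" using ny by simp
    finally show ?thesis .
  qed
  have "\<phi> \<in> cdual TYPE('a)"
  proof (rule cdualI[OF _ _ bound])
    show "linear \<phi>" unfolding \<phi>_def using \<phi>0(1)
      by (intro linearI) (simp_all add: linear_add linear_scale algebra_simps scaleR_conv_of_real)
    show "\<phi> (scaleC \<i> x) = \<i> * \<phi> x" for x by (simp add: \<phi>_def \<phi>0(2) mult_ac)
  qed
  moreover have "onorm \<phi> \<le> 2" by (rule onorm_bound) (use bound in auto)
  moreover have "norm y \<le> cmod (\<phi> y)"
    using abs_Re_le_cmod[of "\<phi>0 y"] \<phi>0(3) ny by (simp add: \<phi>_def norm_mult)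
  ultimately show ?thesis by (rule that)
qed

lemma cdual_separates_points:
  fixes y1 y2 :: "'a::complex_normed_vector"
  assumes "\<And>\<phi>. \<phi> \<in> cdual TYPE('a) \<Longrightarrow> \<phi> y1 = \<phi> y2"
  shows "y1 = y2"
proof -
  obtain \<phi> where \<phi>: "\<phi> \<in> cdual TYPE('a)" "norm (y1 - y2) \<le> cmod (\<phi> (y1 - y2))"
    by (rule norming_cdual)
  then have "norm (y1 - y2) \<le> 0" using assms[OF \<phi>(1)] by (simp add: cdual_diff)
  then show ?thesis by simp
qed

section \<open>Holomorphy from weak holomorphy\<close>

lemma holomorphic_first_order_remainder_bound:
  fixes h :: "complex \<Rightarrow> complex"
  assumes hol: "h holomorphic_on ball z0 (2*r)" and cont: "continuous_on (cball z0 (2*r)) h"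
    and r: "r > 0" and B: "\<And>w. w \<in> cball z0 (2*r) \<Longrightarrow> cmod (h w) \<le> B"
    and w: "cmod (w - z0) \<le> r"
  shows "cmod (h w - h z0 - (w - z0) * deriv h z0) \<le> B * cmod (w - z0)^2 / r^2"
proof -
  define R where "R = 2 * r"
  have R: "R > 0" using r R_def by simp
  have "cmod (h z0) \<le> B" using B[of z0] r by simp
  then have B0: "B \<ge> 0" using norm_ge_zero[of "h z0"] by linarith
  have cauchy: "cmod ((deriv ^^ n) h z0) \<le> fact n * B / R^n" for n
    by (rule Cauchy_inequality) (use hol cont R B in \<open>auto simp: R_def dist_norm\<close>)
  have wb: "w \<in> ball z0 R" using w r R_def by (simp add: dist_norm norm_minus_commute)
  define a where "a n = (deriv ^^ n) h z0 / fact n * (w - z0)^n" for n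
  have s: "a sums h w" unfolding a_def using holomorphic_power_series[OF hol[folded R_def] wb] .
  define t where "t = cmod (w - z0) / R"
  have t0: "t \<ge> 0" and t1: "t \<le> 1/2" using w R r unfolding t_def R_def by (auto simp: divide_simps)
  have a_bound: "cmod (a n) \<le> B * t^n" for n
  proof -
    have "cmod (a n) = cmod ((deriv ^^ n) h z0) / fact n * cmod (w - z0)^n"
      unfolding a_def by (simp add: norm_mult norm_divide norm_power)
    also have "\<dots> \<le> (fact n * B / R^n) / fact n * cmod (w - z0)^n"
      by (intro mult_right_mono divide_right_mono cauchy) auto
    also have "\<dots> = B * t^n" unfolding t_def by (simp add: power_divide)
    finally show ?thesis .
  qed
  have "(\<lambda>n. a (n + 2)) sums (h w - (\<Sum>i<2. a i))"
    using sums_iff_shift[of a 2 "h w - (\<Sum>i<2. a i)"] s by simp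
  moreover have "(\<Sum>i<2. a i) = h z0 + (w - z0) * deriv h z0"
    unfolding a_def by (simp add: numeral_2_eq_2)
  ultimately have tail: "(\<lambda>n. a (n + 2)) sums (h w - h z0 - (w - z0) * deriv h z0)"
    by (simp add: algebra_simps)
  have geom: "(\<lambda>n. B * t^2 * t^n) sums (B * t^2 * (1 / (1 - t)))"
    by (rule sums_mult, rule geometric_sums) (use t0 t1 in auto)
  have "cmod (h w - h z0 - (w - z0) * deriv h z0) \<le> B * t^2 * (1 / (1 - t))"
  proof (rule norm_sums_le[OF tail geom])
    fix n show "cmod (a (n + 2)) \<le> B * t^2 * t^n"
      using a_bound[of "n + 2"] by (simp add: power_add power2_eq_square mult_ac)
  qed
  also have "\<dots> \<le> B * t^2 * 2"
    using t1 B0 by (intro mult_left_mono) (auto simp: divide_simps)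
  also have "\<dots> = B * cmod (w - z0)^2 / (2 * r^2)"
    unfolding t_def R_def by (simp add: power2_eq_square field_simps)
  also have "\<dots> \<le> B * cmod (w - z0)^2 / r^2" using B0 r by (simp add: divide_left_mono)
  finally show ?thesis .
qed

lemma weakly_holomorphic_weak_derivative:
  fixes h :: "complex \<Rightarrow> 'b::complex_normed_vector"
  assumes refl: "creflexive TYPE('b)" and U: "open U" and r: "r > 0" "cball z0 r \<subseteq> U"
    and B: "\<And>z. z \<in> U \<Longrightarrow> norm (h z) \<le> B"
    and hol: "\<And>\<phi>. \<phi> \<in> cdual TYPE('b) \<Longrightarrow> (\<lambda>z. \<phi> (h z)) holomorphic_on U"
  shows "\<exists>y. (\<forall>\<phi>\<in>cdual TYPE('b). deriv (\<lambda>z. \<phi> (h z)) z0 = \<phi> y) \<and> norm y \<le> 2 * B / r"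
proof -
  let ?D = "\<lambda>\<phi>. deriv (\<lambda>z. \<phi> (h z)) z0"
  have z0: "z0 \<in> U" using r by auto
  have B0: "B \<ge> 0" using B[OF z0] norm_ge_zero[of "h z0"] by linarith
  have diff: "(\<lambda>z. \<phi> (h z)) field_differentiable at z0" if "\<phi> \<in> cdual TYPE('b)" for \<phi>
    using holomorphic_on_imp_differentiable_at[OF hol[OF that] U z0] .
  have D_bound: "cmod (?D \<phi>) \<le> onorm \<phi> * B / r" if \<phi>: "\<phi> \<in> cdual TYPE('b)" for \<phi>
  proof -
    have "cmod ((deriv ^^ 1) (\<lambda>z. \<phi> (h z)) z0) \<le> fact 1 * (onorm \<phi> * B) / r ^ 1"
    proof (rule Cauchy_inequality)
      show "(\<lambda>z. \<phi> (h z)) holomorphic_on ball z0 r"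
        using hol[OF \<phi>] r(2) ball_subset_cball by (blast intro: holomorphic_on_subset)
      show "continuous_on (cball z0 r) (\<lambda>z. \<phi> (h z))"
        using hol[OF \<phi>] r(2) by (blast intro: holomorphic_on_imp_continuous_on holomorphic_on_subset)
      fix w assume "cmod (z0 - w) = r"
      then have "w \<in> U" using r(2) by (auto simp: dist_norm)
      have "cmod (\<phi> (h w)) \<le> onorm \<phi> * norm (h w)" by (rule cdual_norm_le[OF \<phi>])
      also have "\<dots> \<le> onorm \<phi> * B" by (intro mult_left_mono B \<open>w \<in> U\<close> cdual_onorm_nonneg[OF \<phi>])
      finally show "cmod (\<phi> (h w)) \<le> onorm \<phi> * B" .
    qed (use r in auto)
    then show ?thesis by simp
  qed
  have "\<exists>y. \<forall>\<phi>\<in>cdual TYPE('b). ?D \<phi> = \<phi> y"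
  proof (rule refl[unfolded creflexive_def, rule_format], intro conjI ballI allI)
    fix \<phi> \<psi> assume "\<phi> \<in> cdual TYPE('b)" "\<psi> \<in> cdual TYPE('b)"
    then show "?D (\<lambda>y. \<phi> y + \<psi> y) = ?D \<phi> + ?D \<psi>" using deriv_add[OF diff diff] by simp
  next
    fix \<phi> c assume "\<phi> \<in> cdual TYPE('b)"
    then show "?D (\<lambda>y. c * \<phi> y) = c * ?D \<phi>" using deriv_cmult[OF diff] by simp
  next
    show "\<exists>K. \<forall>\<phi>\<in>cdual TYPE('b). cmod (?D \<phi>) \<le> K * onorm \<phi>"
      using D_bound r by (intro exI[of _ "B / r"]) (auto simp: field_simps)
  qed
  then obtain y where y: "\<forall>\<phi>\<in>cdual TYPE('b). ?D \<phi> = \<phi> y" by blast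
  obtain \<phi> where \<phi>: "\<phi> \<in> cdual TYPE('b)" "onorm \<phi> \<le> 2" "norm y \<le> cmod (\<phi> y)"
    by (rule norming_cdual)
  have "norm y \<le> onorm \<phi> * B / r" using \<phi>(3) D_bound[OF \<phi>(1)] y \<phi>(1) by simp
  also have "\<dots> \<le> 2 * B / r" using \<phi>(2) B0 r by (intro divide_right_mono mult_right_mono) auto
  finally show ?thesis using y by blast
qed

lemma weakly_holomorphic_remainder_bound:
  fixes h :: "complex \<Rightarrow> 'b::complex_normed_vector"
  assumes U: "open U" and r: "r > 0" "cball z0 (2*r) \<subseteq> U"
    and B: "\<And>z. z \<in> U \<Longrightarrow> norm (h z) \<le> B"
    and hol: "\<And>\<phi>. \<phi> \<in> cdual TYPE('b) \<Longrightarrow> (\<lambda>z. \<phi> (h z)) holomorphic_on U"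
    and y: "\<And>\<phi>. \<phi> \<in> cdual TYPE('b) \<Longrightarrow> deriv (\<lambda>z. \<phi> (h z)) z0 = \<phi> y"
    and w: "cmod (w - z0) \<le> r"
  shows "norm (h w - h z0 - scaleC (w - z0) y) \<le> 2 * B * cmod (w - z0)^2 / r^2"
proof -
  let ?v = "h w - h z0 - scaleC (w - z0) y"
  have "z0 \<in> U" using r by auto
  then have B0: "B \<ge> 0" using B norm_ge_zero[of "h z0"] by (meson order_trans)
  obtain \<phi> where \<phi>: "\<phi> \<in> cdual TYPE('b)" "onorm \<phi> \<le> 2" "norm ?v \<le> cmod (\<phi> ?v)"
    by (rule norming_cdual)
  define k where "k z = \<phi> (h z)" for z
  have "\<phi> ?v = k w - k z0 - (w - z0) * deriv k z0"
    unfolding k_def using \<phi>(1) y by (simp add: cdual_diff cdual_scaleC)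
  also have "cmod \<dots> \<le> (2 * B) * cmod (w - z0)^2 / r^2"
  proof (rule holomorphic_first_order_remainder_bound[OF _ _ r(1) _ w])
    show "k holomorphic_on ball z0 (2*r)"
      unfolding k_def using hol[OF \<phi>(1)] r(2) ball_subset_cball by (blast intro: holomorphic_on_subset)
    show "continuous_on (cball z0 (2*r)) k"
      unfolding k_def using hol[OF \<phi>(1)] r(2)
      by (blast intro: holomorphic_on_imp_continuous_on holomorphic_on_subset)
    fix w' assume "w' \<in> cball z0 (2*r)"
    then have "w' \<in> U" using r by blast
    have "cmod (k w') \<le> onorm \<phi> * norm (h w')" unfolding k_def by (rule cdual_norm_le[OF \<phi>(1)])
    also have "\<dots> \<le> 2 * B"
      using \<phi>(2) B[OF \<open>w' \<in> U\<close>] B0 cdual_onorm_nonneg[OF \<phi>(1)] by (intro mult_mono) auto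
    finally show "cmod (k w') \<le> 2 * B" .
  qed
  finally show ?thesis using \<phi>(3) by simp
qed

lemma quadratic_bound_imp_tendsto_quotient_zero:
  fixes F :: "complex \<Rightarrow> 'a::real_normed_vector"
  assumes r: "r > 0" and F: "\<And>w. cmod (w - z0) \<le> r \<Longrightarrow> norm (F w) \<le> K * cmod (w - z0)^2"
  shows "((\<lambda>w. norm (F w) / cmod (w - z0)) \<longlongrightarrow> 0) (at z0)"
proof (rule Lim_null_comparison)
  show "\<forall>\<^sub>F w in at z0. norm (norm (F w) / cmod (w - z0)) \<le> K * cmod (w - z0)"
  proof (rule eventually_mono[OF eventually_at_ball'[OF r, of z0 UNIV]])
    fix w assume "w \<in> ball z0 r \<and> w \<noteq> z0 \<and> w \<in> UNIV"
    then have w: "w \<noteq> z0" "cmod (w - z0) \<le> r" by (auto simp: dist_norm norm_minus_commute)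
    have "norm (F w) / cmod (w - z0) \<le> K * cmod (w - z0)^2 / cmod (w - z0)"
      using F[OF w(2)] by (intro divide_right_mono) auto
    also have "\<dots> = K * cmod (w - z0)" using w(1) by (simp add: power2_eq_square)
    finally show "norm (norm (F w) / cmod (w - z0)) \<le> K * cmod (w - z0)" by simp
  qed
  have "((\<lambda>w. w - z0) \<longlongrightarrow> z0 - z0) (at z0)" by (intro tendsto_diff tendsto_ident_at tendsto_const)
  then have "((\<lambda>w. w - z0) \<longlongrightarrow> 0) (at z0)" by simp
  then show "((\<lambda>w. K * cmod (w - z0)) \<longlongrightarrow> 0) (at z0)"
    by (intro tendsto_mult_right_zero tendsto_norm_zero)
qed

lemma weakly_holomorphic_family_derivative:
  fixes g :: "complex \<Rightarrow> ('a::complex_normed_vector \<Rightarrow>\<^sub>L 'b::complex_normed_vector)"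
  assumes refl: "creflexive TYPE('b)" and U: "open U" and r: "r > 0" "cball z0 r \<subseteq> U"
    and B: "\<And>z. z \<in> U \<Longrightarrow> norm (g z) \<le> B"
    and g_clinear: "\<And>z. z \<in> U \<Longrightarrow> clinear (blinfun_apply (g z))"
    and hol: "\<And>\<phi> x. \<phi> \<in> cdual TYPE('b) \<Longrightarrow> (\<lambda>z. \<phi> (blinfun_apply (g z) x)) holomorphic_on U"
  shows "\<exists>D. clinear (blinfun_apply D) \<and>
           (\<forall>\<phi>\<in>cdual TYPE('b). \<forall>x. \<phi> (blinfun_apply D x) = deriv (\<lambda>z. \<phi> (blinfun_apply (g z) x)) z0)"
proof -
  have z0: "z0 \<in> U" using r by auto
  have gx_bound: "norm (blinfun_apply (g z) x) \<le> B * norm x" if "z \<in> U" for z x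
    using norm_blinfun[of "g z" x] B[OF that] by (meson mult_right_mono norm_ge_zero order_trans)
  let ?P = "\<lambda>x y. (\<forall>\<phi>\<in>cdual TYPE('b). deriv (\<lambda>z. \<phi> (blinfun_apply (g z) x)) z0 = \<phi> y)
                    \<and> norm y \<le> 2 * (B * norm x) / r"
  define Df where "Df x = (SOME y. ?P x y)" for x
  have Df: "?P x (Df x)" for x
    unfolding Df_def
    by (rule someI_ex, rule weakly_holomorphic_weak_derivative[where h = "\<lambda>z. blinfun_apply (g z) x"
          and B = "B * norm x", OF refl U r gx_bound hol])
  have Df_deriv: "\<phi> (Df x) = deriv (\<lambda>z. \<phi> (blinfun_apply (g z) x)) z0"
    if "\<phi> \<in> cdual TYPE('b)" for \<phi> x
    using Df[of x] that by simp
  have diff: "(\<lambda>z. \<phi> (blinfun_apply (g z) x)) field_differentiable at z0"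
    if "\<phi> \<in> cdual TYPE('b)" for \<phi> x
    using holomorphic_on_imp_differentiable_at[OF hol[OF that] U z0] .
  have Df_add: "Df (x1 + x2) = Df x1 + Df x2" for x1 x2
  proof (rule cdual_separates_points)
    fix \<phi> :: "'b \<Rightarrow> complex" assume \<phi>: "\<phi> \<in> cdual TYPE('b)"
    then have "(\<lambda>z. \<phi> (blinfun_apply (g z) (x1 + x2)))
                 = (\<lambda>z. \<phi> (blinfun_apply (g z) x1) + \<phi> (blinfun_apply (g z) x2))"
      by (simp add: blinfun.add_right cdual_add)
    then show "\<phi> (Df (x1 + x2)) = \<phi> (Df x1 + Df x2)"
      using \<phi> by (simp add: Df_deriv cdual_add deriv_add[OF diff diff])
  qed
  have Df_scaleC: "Df (scaleC c x) = scaleC c (Df x)" for c x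
  proof (rule cdual_separates_points)
    fix \<phi> :: "'b \<Rightarrow> complex" assume \<phi>: "\<phi> \<in> cdual TYPE('b)"
    have "\<forall>\<^sub>F z in nhds z0. \<phi> (blinfun_apply (g z) (scaleC c x)) = c * \<phi> (blinfun_apply (g z) x)"
      using eventually_nhds_in_open[OF U z0]
      by eventually_elim (use g_clinear \<phi> in \<open>simp add: clinear_scaleC cdual_scaleC\<close>)
    then have "deriv (\<lambda>z. \<phi> (blinfun_apply (g z) (scaleC c x))) z0
                 = deriv (\<lambda>z. c * \<phi> (blinfun_apply (g z) x)) z0"
      by (rule deriv_cong_ev) simp
    then show "\<phi> (Df (scaleC c x)) = \<phi> (scaleC c (Df x))"
      using \<phi> by (simp add: Df_deriv cdual_scaleC deriv_cmult[OF diff])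
  qed
  have "bounded_linear Df"
  proof (rule bounded_linear_intro[OF Df_add])
    show "Df (t *\<^sub>R x) = t *\<^sub>R Df x" for t x by (simp add: scaleR_scaleC Df_scaleC)
    show "norm (Df x) \<le> norm x * (2 * B / r)" for x using Df[of x] by (simp add: field_simps)
  qed
  then have "blinfun_apply (Blinfun Df) = Df" by (rule bounded_linear_Blinfun_apply)
  with Df_add Df_scaleC Df_deriv show ?thesis
    by (intro exI[of _ "Blinfun Df"]) (simp add: clinear_def)
qed

lemma op_holomorphic_onI_weakly_holomorphic:
  fixes g :: "complex \<Rightarrow> ('a::complex_normed_vector \<Rightarrow>\<^sub>L 'b::complex_normed_vector)"
  assumes refl: "creflexive TYPE('b)" and U: "open U"
    and B: "\<And>z. z \<in> U \<Longrightarrow> norm (g z) \<le> B"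
    and g_clinear: "\<And>z. z \<in> U \<Longrightarrow> clinear (blinfun_apply (g z))"
    and hol: "\<And>\<phi> x. \<phi> \<in> cdual TYPE('b) \<Longrightarrow> (\<lambda>z. \<phi> (blinfun_apply (g z) x)) holomorphic_on U"
  shows "op_holomorphic_on g U"
  unfolding op_holomorphic_on_def
proof
  fix z0 assume z0: "z0 \<in> U"
  obtain e where e: "e > 0" "cball z0 e \<subseteq> U" using U z0 open_contains_cball by blast
  define r where "r = e / 2"
  have r: "r > 0" "cball z0 (2*r) \<subseteq> U" using e r_def by auto
  have "cball z0 r \<subseteq> U" using r(2) cball_subset_cball_iff[of z0 r z0 "2*r"] r(1) by auto
  from weakly_holomorphic_family_derivative[where g = g and B = B, OF refl U r(1) this B g_clinear hol]
  obtain D where D: "clinear (blinfun_apply D)"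
    "\<And>\<phi> x. \<phi> \<in> cdual TYPE('b) \<Longrightarrow> deriv (\<lambda>z. \<phi> (blinfun_apply (g z) x)) z0 = \<phi> (blinfun_apply D x)"
    by metis
  have gx_bound: "norm (blinfun_apply (g z) x) \<le> B * norm x" if "z \<in> U" for z x
    using norm_blinfun[of "g z" x] B[OF that] by (meson mult_right_mono norm_ge_zero order_trans)
  have remainder: "norm (g w - g z0 - cscale_blinfun (w - z0) D) \<le> 2 * B / r^2 * cmod (w - z0)^2"
    if w: "cmod (w - z0) \<le> r" for w
  proof (rule norm_blinfun_bound)
    have "0 \<le> B" using B[OF z0] norm_ge_zero[of "g z0"] by linarith
    then show "0 \<le> 2 * B / r^2 * cmod (w - z0)^2" by simp
    fix x
    have "norm (blinfun_apply (g w) x - blinfun_apply (g z0) x - scaleC (w - z0) (blinfun_apply D x))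
            \<le> 2 * (B * norm x) * cmod (w - z0)^2 / r^2"
      using weakly_holomorphic_remainder_bound[where h = "\<lambda>z. blinfun_apply (g z) x" and B = "B * norm x",
          OF U r gx_bound hol D(2) w] by simp
    then show "norm (blinfun_apply (g w - g z0 - cscale_blinfun (w - z0) D) x)
                 \<le> 2 * B / r^2 * cmod (w - z0)^2 * norm x"
      by (simp add: blinfun.diff_left blinfun.add_left cscale_blinfun_apply field_simps)
  qed
  show "\<exists>D. clinear (blinfun_apply D) \<and>
          ((\<lambda>w. norm (g w - g z0 - cscale_blinfun (w - z0) D) / cmod (w - z0)) \<longlongrightarrow> 0) (at z0)"
    using D(1) quadratic_bound_imp_tendsto_quotient_zero[OF r(1) remainder] by blast
qed

lemma op_holomorphic_on_cdual_apply:
  fixes f :: "complex \<Rightarrow> ('a::complex_normed_vector \<Rightarrow>\<^sub>L 'b::complex_normed_vector)"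
  assumes hol: "op_holomorphic_on f U" and \<theta>: "\<theta> \<in> cdual TYPE('b)"
  shows "(\<lambda>z. \<theta> (blinfun_apply (f z) a)) holomorphic_on U"
  unfolding holomorphic_on_def
proof
  fix z assume z: "z \<in> U"
  obtain D where D: "((\<lambda>w. norm (f w - f z - cscale_blinfun (w - z) D) / cmod (w - z)) \<longlongrightarrow> 0) (at z)"
    using hol z unfolding op_holomorphic_on_def by blast
  let ?h = "\<lambda>w. \<theta> (blinfun_apply (f w) a)" and ?R = "\<lambda>w. f w - f z - cscale_blinfun (w - z) D"
  have "((\<lambda>w. (?h w - ?h z) / (w - z) - \<theta> (blinfun_apply D a)) \<longlongrightarrow> 0) (at z)"
  proof (rule Lim_null_comparison)
    show "\<forall>\<^sub>F w in at z. norm ((?h w - ?h z) / (w - z) - \<theta> (blinfun_apply D a))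
            \<le> onorm \<theta> * norm a * (norm (?R w) / cmod (w - z))"
    proof (rule eventually_mono[OF eventually_at_ball'[OF zero_less_one, of z UNIV]])
      fix w assume "w \<in> ball z 1 \<and> w \<noteq> z \<and> w \<in> UNIV"
      then have wz: "w - z \<noteq> 0" by simp
      have "(?h w - ?h z) / (w - z) - \<theta> (blinfun_apply D a) = \<theta> (blinfun_apply (?R w) a) / (w - z)"
        using wz \<theta> by (simp add: blinfun.diff_left blinfun.add_left cscale_blinfun_apply cdual_diff
            cdual_add cdual_scaleC field_simps)
      moreover have "cmod (\<theta> (blinfun_apply (?R w) a)) \<le> onorm \<theta> * (norm (?R w) * norm a)"
        using cdual_norm_le[OF \<theta>] norm_blinfun[of "?R w" a] cdual_onorm_nonneg[OF \<theta>]
        by (meson mult_left_mono order_trans)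
      ultimately show "norm ((?h w - ?h z) / (w - z) - \<theta> (blinfun_apply D a))
            \<le> onorm \<theta> * norm a * (norm (?R w) / cmod (w - z))"
        using wz by (simp add: norm_divide divide_right_mono field_simps)
    qed
    show "((\<lambda>w. onorm \<theta> * norm a * (norm (?R w) / cmod (w - z))) \<longlongrightarrow> 0) (at z)"
      using tendsto_mult_right_zero[OF D] by blast
  qed
  then have "(?h has_field_derivative \<theta> (blinfun_apply D a)) (at z)"
    unfolding has_field_derivative_iff
    by (rule Lim_transform[OF tendsto_const])
  then show "?h field_differentiable at z within U"
    unfolding field_differentiable_def by (blast intro: has_field_derivative_at_within)
qed

section \<open>Density of compatible functionals\<close>

definition compatible_cdual ::
    "('a::complex_normed_vector \<Rightarrow> 'w) \<Rightarrow> ('b::complex_normed_vector \<Rightarrow> 'w) \<Rightarrow> ('b \<Rightarrow> complex) set" where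
  "compatible_cdual j1 j2 =
     {\<psi> \<in> cdual TYPE('b). \<exists>\<theta>\<in>cdual TYPE('a). \<forall>a b. j1 a = j2 b \<longrightarrow> \<psi> b = \<theta> a}"

lemma compatible_cdual_subset_cdual: "compatible_cdual j1 j2 \<subseteq> cdual TYPE('b)"
  for j2 :: "'b::complex_normed_vector \<Rightarrow> 'w"
  unfolding compatible_cdual_def by blast

lemma compatible_cdual_zero_mem: "(\<lambda>y. 0) \<in> compatible_cdual j1 j2"
  unfolding compatible_cdual_def
  by (intro CollectI conjI bexI[of _ "\<lambda>x. 0"] cdual_zero_mem allI impI) simp

lemma compatible_cdual_add_mem:
  fixes j1 :: "'a::complex_normed_vector \<Rightarrow> 'w" and j2 :: "'b::complex_normed_vector \<Rightarrow> 'w"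
  assumes \<psi>: "\<psi> \<in> compatible_cdual j1 j2" and \<psi>': "\<psi>' \<in> compatible_cdual j1 j2"
  shows "(\<lambda>y. \<psi> y + \<psi>' y) \<in> compatible_cdual j1 j2"
proof -
  obtain \<theta> where \<theta>: "\<theta> \<in> cdual TYPE('a)" "\<And>a b. j1 a = j2 b \<Longrightarrow> \<psi> b = \<theta> a"
    using \<psi> unfolding compatible_cdual_def by blast
  obtain \<theta>' where \<theta>': "\<theta>' \<in> cdual TYPE('a)" "\<And>a b. j1 a = j2 b \<Longrightarrow> \<psi>' b = \<theta>' a"
    using \<psi>' unfolding compatible_cdual_def by blast
  have "(\<lambda>y. \<psi> y + \<psi>' y) \<in> cdual TYPE('b)"
    using \<psi> \<psi>' unfolding compatible_cdual_def by (blast intro: cdual_add_mem)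
  moreover have "(\<lambda>x. \<theta> x + \<theta>' x) \<in> cdual TYPE('a)" using \<theta>(1) \<theta>'(1) by (rule cdual_add_mem)
  ultimately show ?thesis unfolding compatible_cdual_def
    by (intro CollectI conjI bexI[of _ "\<lambda>x. \<theta> x + \<theta>' x"] allI impI) (simp_all add: \<theta>(2) \<theta>'(2))
qed

lemma compatible_cdual_mult_mem:
  fixes j1 :: "'a::complex_normed_vector \<Rightarrow> 'w" and j2 :: "'b::complex_normed_vector \<Rightarrow> 'w"
  assumes \<psi>: "\<psi> \<in> compatible_cdual j1 j2"
  shows "(\<lambda>y. c * \<psi> y) \<in> compatible_cdual j1 j2"
proof -
  obtain \<theta> where \<theta>: "\<theta> \<in> cdual TYPE('a)" "\<And>a b. j1 a = j2 b \<Longrightarrow> \<psi> b = \<theta> a"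
    using \<psi> unfolding compatible_cdual_def by blast
  have "(\<lambda>y. c * \<psi> y) \<in> cdual TYPE('b)"
    using \<psi> unfolding compatible_cdual_def by (blast intro: cdual_mult_mem)
  moreover have "(\<lambda>x. c * \<theta> x) \<in> cdual TYPE('a)" using \<theta>(1) by (rule cdual_mult_mem)
  ultimately show ?thesis unfolding compatible_cdual_def
    by (intro CollectI conjI bexI[of _ "\<lambda>x. c * \<theta> x"] allI impI) (simp_all add: \<theta>(2))
qed

definition imult_blinfun :: "('a::real_normed_vector \<Rightarrow>\<^sub>L complex) \<Rightarrow> ('a \<Rightarrow>\<^sub>L complex)" where
  "imult_blinfun \<phi> = Blinfun (\<lambda>y. \<i> * blinfun_apply \<phi> y)"

lemma blinfun_apply_imult_blinfun: "blinfun_apply (imult_blinfun \<phi>) y = \<i> * blinfun_apply \<phi> y"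
  unfolding imult_blinfun_def
  by (simp add: bounded_linear_Blinfun_apply
      bounded_linear_compose[OF bounded_linear_mult_right blinfun.bounded_linear_right])

lemma linear_imult_blinfun: "linear imult_blinfun"
  by (rule linearI; rule blinfun_eqI)
    (simp_all add: blinfun_apply_imult_blinfun blinfun.add_left blinfun.scaleR_left algebra_simps)

lemma imult_blinfun_imult_blinfun: "imult_blinfun (imult_blinfun \<phi>) = - \<phi>"
  by (rule blinfun_eqI) (simp add: blinfun_apply_imult_blinfun blinfun.minus_left)

lemma norm_imult_blinfun: "norm (imult_blinfun \<phi>) \<le> 1 * norm \<phi>"
  by (simp, rule norm_blinfun_bound) (simp_all add: blinfun_apply_imult_blinfun norm_mult norm_blinfun)

lemma bounded_linear_imult_blinfun: "bounded_linear imult_blinfun"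
  using norm_imult_blinfun
  by (intro bounded_linear_intro[where K=1])
    (simp_all add: linear_add[OF linear_imult_blinfun] linear_scale[OF linear_imult_blinfun])

lemma Blinfun_cdual_add:
  assumes "\<phi> \<in> cdual T" "\<psi> \<in> cdual T"
  shows "Blinfun (\<lambda>y. \<phi> y + \<psi> y) = Blinfun \<phi> + Blinfun \<psi>"
  by (rule blinfun_eqI) (simp add: blinfun_apply_Blinfun_cdual[OF cdual_add_mem[OF assms]]
      blinfun_apply_Blinfun_cdual[OF assms(1)] blinfun_apply_Blinfun_cdual[OF assms(2)] blinfun.add_left)

lemma Blinfun_cdual_mult:
  assumes "\<phi> \<in> cdual T"
  shows "Blinfun (\<lambda>y. c * \<phi> y) = Re c *\<^sub>R Blinfun \<phi> + Im c *\<^sub>R imult_blinfun (Blinfun \<phi>)"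
proof (rule blinfun_eqI)
  fix y
  have "c * \<phi> y = Re c *\<^sub>R \<phi> y + Im c *\<^sub>R (\<i> * \<phi> y)" by (simp add: complex_eq_iff)
  then show "blinfun_apply (Blinfun (\<lambda>y. c * \<phi> y)) y
      = blinfun_apply (Re c *\<^sub>R Blinfun \<phi> + Im c *\<^sub>R imult_blinfun (Blinfun \<phi>)) y"
    by (simp add: blinfun_apply_Blinfun_cdual[OF cdual_mult_mem[OF assms]]
        blinfun_apply_Blinfun_cdual[OF assms] blinfun.add_left blinfun.scaleR_left
        blinfun_apply_imult_blinfun)
qed

lemma Blinfun_cdual_diff:
  "\<phi> \<in> cdual T \<Longrightarrow> \<psi> \<in> cdual T \<Longrightarrow> Blinfun \<phi> - Blinfun \<psi> = Blinfun (\<lambda>y. \<phi> y - \<psi> y)"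
  using Blinfun_cdual_add[of \<phi> T "\<lambda>y. (-1) * \<psi> y"] Blinfun_cdual_mult[of \<psi> T "-1"] cdual_mult_mem[of \<psi> T "-1"]
  by simp

lemma norm_Blinfun_cdual: "\<phi> \<in> cdual T \<Longrightarrow> norm (Blinfun \<phi>) = onorm \<phi>"
  by (simp add: norm_blinfun.rep_eq blinfun_apply_Blinfun_cdual)

lemma subspace_closure:
  fixes S :: "'a::real_normed_vector set"
  assumes S: "subspace S"
  shows "subspace (closure S)"
  unfolding subspace_def
proof (intro conjI ballI allI)
  show "0 \<in> closure S" using subspace_0[OF S] closure_subset by blast
next
  fix x y assume "x \<in> closure S" "y \<in> closure S"
  then obtain u v where u: "\<And>n. u n \<in> S" "u \<longlonglongrightarrow> x" and v: "\<And>n. v n \<in> S" "v \<longlonglongrightarrow> y"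
    unfolding closure_sequential by blast
  have "(\<lambda>n. u n + v n) \<longlonglongrightarrow> x + y" by (intro tendsto_add u v)
  moreover have "u n + v n \<in> S" for n using subspace_add[OF S u(1) v(1)] .
  ultimately show "x + y \<in> closure S"
    unfolding closure_sequential by (intro exI[of _ "\<lambda>n. u n + v n"]) blast
next
  fix c :: real and x assume "x \<in> closure S"
  then obtain u where u: "\<And>n. u n \<in> S" "u \<longlonglongrightarrow> x" unfolding closure_sequential by blast
  have "(\<lambda>n. c *\<^sub>R u n) \<longlonglongrightarrow> c *\<^sub>R x" by (intro tendsto_scaleR tendsto_const u)
  moreover have "c *\<^sub>R u n \<in> S" for n using subspace_scale[OF S u(1)] .
  ultimately show "c *\<^sub>R x \<in> closure S"
    unfolding closure_sequential by (intro exI[of _ "\<lambda>n. c *\<^sub>R u n"]) blast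
qed

lemma compatible_cdual_of_product_functional:
  fixes j1 :: "'a::complex_normed_vector \<Rightarrow> 'w" and j2 :: "'b::complex_normed_vector \<Rightarrow> 'w"
    and \<xi> :: "'a \<times> 'b \<Rightarrow> complex"
  assumes \<xi>: "linear \<xi>" "\<And>a b. \<xi> (scaleC \<i> a, scaleC \<i> b) = \<i> * \<xi> (a, b)"
    "\<And>p. cmod (\<xi> p) \<le> K * norm p"
    and vanishes: "\<And>a b. j1 a = j2 b \<Longrightarrow> \<xi> (a, b) = 0"
  shows "(\<lambda>b. \<xi> (0, b)) \<in> compatible_cdual j1 j2"
proof -
  have \<xi>_add: "\<xi> (p + q) = \<xi> p + \<xi> q" and \<xi>_scale: "\<xi> (r *\<^sub>R p) = r *\<^sub>R \<xi> p" for p q r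
    using \<xi>(1) by (simp_all add: linear_add linear_scale)
  have "(\<lambda>b. \<xi> (0, b)) \<in> cdual TYPE('b)"
  proof (rule cdualI[where K=K])
    show "linear (\<lambda>b. \<xi> (0, b))"
      using \<xi>_add[of "(0, _)" "(0, _)"] \<xi>_scale[of _ "(0, _)"] by (intro linearI) simp_all
    show "\<xi> (0, scaleC \<i> b) = \<i> * \<xi> (0, b)" for b using \<xi>(2)[of 0 b] by simp
    show "cmod (\<xi> (0, b)) \<le> K * norm b" for b using \<xi>(3)[of "(0, b)"] by (simp add: norm_Pair)
  qed
  moreover have "(\<lambda>a. - \<xi> (a, 0)) \<in> cdual TYPE('a)"
  proof (rule cdualI[where K=K])
    show "linear (\<lambda>a. - \<xi> (a, 0))"
      using \<xi>_add[of "(_, 0)" "(_, 0)"] \<xi>_scale[of _ "(_, 0)"] by (intro linearI) simp_all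
    show "- \<xi> (scaleC \<i> a, 0) = \<i> * - \<xi> (a, 0)" for a using \<xi>(2)[of a 0] by simp
    show "cmod (- \<xi> (a, 0)) \<le> K * norm a" for a using \<xi>(3)[of "(a, 0)"] by (simp add: norm_Pair)
  qed
  moreover have "\<xi> (0, b) = - \<xi> (a, 0)" if "j1 a = j2 b" for a b
    using vanishes[OF that] \<xi>_add[of "(a, 0)" "(0, b)"] by (simp add: eq_neg_iff_add_eq_0 add.commute)
  ultimately show ?thesis unfolding compatible_cdual_def
    by (intro CollectI conjI bexI[of _ "\<lambda>a. - \<xi> (a, 0)"] allI impI) simp_all
qed

lemma compatible_cdual_separates:
  fixes j1 :: "'a::complex_banach \<Rightarrow> 'w::{complex_vector,t2_space}" and j2 :: "'b::complex_banach \<Rightarrow> 'w"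
  assumes j1: "continuous_inclusion j1" and j2: "continuous_inclusion j2"
    and annihilated: "\<And>\<psi>. \<psi> \<in> compatible_cdual j1 j2 \<Longrightarrow> \<psi> y = 0"
  shows "y = 0"
proof (rule ccontr)
  assume y0: "y \<noteq> 0"
  have j1_lin: "clinear j1" and j1_cont: "continuous_on UNIV j1"
    and j2_lin: "clinear j2" and j2_inj: "inj j2" and j2_cont: "continuous_on UNIV j2"
    using j1 j2 unfolding continuous_inclusion_def by auto
  define N where "N = {p::'a \<times> 'b. j1 (fst p) = j2 (snd p)}"
  have "closed N" unfolding N_def
    by (intro closed_Collect_eq continuous_on_compose2[OF j1_cont] continuous_on_compose2[OF j2_cont]
        continuous_intros) auto
  have "subspace N" unfolding N_def subspace_def
    using clinear_0[OF j1_lin] clinear_0[OF j2_lin] clinear_imp_linear[OF j1_lin] clinear_imp_linear[OF j2_lin]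
    by (simp add: linear_add linear_scale)
  define J where "J p = (scaleC \<i> (fst p), scaleC \<i> (snd p))" for p :: "'a \<times> 'b"
  have J: "linear J" "\<And>x. J (J x) = - x" "\<And>x. norm (J x) \<le> 1 * norm x" "\<And>m. m \<in> N \<Longrightarrow> J m \<in> N"
  proof -
    show "linear J" unfolding J_def by (rule linearI) (simp_all add: scaleC_add_right scaleC_scaleR_commute)
    show "J (J x) = - x" for x unfolding J_def by (simp add: scaleC_scaleC scaleC_minus_one prod_eq_iff)
    show "norm (J x) \<le> 1 * norm x" for x unfolding J_def by (cases x) (simp add: norm_Pair norm_scaleC)
    show "J m \<in> N" if "m \<in> N" for m using that j1_lin j2_lin unfolding J_def N_def by (simp add: clinear_scaleC)
  qed
  have "(0, y) \<notin> N"
    using y0 j2_inj clinear_0[OF j1_lin] clinear_0[OF j2_lin] unfolding N_def inj_def by auto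
  from separating_functional_complex[OF \<open>subspace N\<close> \<open>closed N\<close> this J]
  obtain \<xi> :: "'a \<times> 'b \<Rightarrow> complex" where \<xi>: "linear \<xi>" "\<And>p. \<xi> (J p) = \<i> * \<xi> p"
    "Re (\<xi> (0, y)) = 1" "\<And>m. m \<in> N \<Longrightarrow> \<xi> m = 0" "\<And>p. cmod (\<xi> p) \<le> (1 + 1) * norm p / infdist (0, y) N"
    by blast
  have "(\<lambda>b. \<xi> (0, b)) \<in> compatible_cdual j1 j2"
  proof (rule compatible_cdual_of_product_functional[OF \<xi>(1)])
    show "\<xi> (scaleC \<i> a, scaleC \<i> b) = \<i> * \<xi> (a, b)" for a b using \<xi>(2)[of "(a, b)"] by (simp add: J_def)
    show "cmod (\<xi> p) \<le> 2 / infdist (0, y) N * norm p" for p using \<xi>(5)[of p] by simp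
    show "\<xi> (a, b) = 0" if "j1 a = j2 b" for a b using \<xi>(4) that by (simp add: N_def)
  qed
  with annihilated \<xi>(3) show False by force
qed

lemma creflexive_represents_blinfun_functional:
  fixes \<Lambda> :: "('b::complex_normed_vector \<Rightarrow>\<^sub>L complex) \<Rightarrow> complex"
  assumes refl: "creflexive TYPE('b)" and \<Lambda>: "linear \<Lambda>" "\<And>x. \<Lambda> (imult_blinfun x) = \<i> * \<Lambda> x"
    and bound: "\<And>x. cmod (\<Lambda> x) \<le> K * norm x"
  shows "\<exists>y. \<forall>\<phi>\<in>cdual TYPE('b). \<Lambda> (Blinfun \<phi>) = \<phi> y"
proof (rule refl[unfolded creflexive_def, rule_format], intro conjI ballI allI)
  fix \<phi> \<psi> :: "'b \<Rightarrow> complex" assume "\<phi> \<in> cdual TYPE('b)" "\<psi> \<in> cdual TYPE('b)"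
  then show "\<Lambda> (Blinfun (\<lambda>y. \<phi> y + \<psi> y)) = \<Lambda> (Blinfun \<phi>) + \<Lambda> (Blinfun \<psi>)"
    using \<Lambda>(1) by (simp add: Blinfun_cdual_add linear_add)
next
  fix \<phi> :: "'b \<Rightarrow> complex" and c assume "\<phi> \<in> cdual TYPE('b)"
  then have "\<Lambda> (Blinfun (\<lambda>y. c * \<phi> y)) = Re c * \<Lambda> (Blinfun \<phi>) + Im c * (\<i> * \<Lambda> (Blinfun \<phi>))"
    using \<Lambda> by (simp add: Blinfun_cdual_mult linear_add linear_scale scaleR_conv_of_real)
  also have "\<dots> = c * \<Lambda> (Blinfun \<phi>)" by (simp add: complex_eq_iff algebra_simps)
  finally show "\<Lambda> (Blinfun (\<lambda>y. c * \<phi> y)) = c * \<Lambda> (Blinfun \<phi>)" .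
next
  show "\<exists>K. \<forall>\<phi>\<in>cdual TYPE('b). cmod (\<Lambda> (Blinfun \<phi>)) \<le> K * onorm \<phi>"
  proof (intro exI[of _ K] ballI)
    fix \<phi> :: "'b \<Rightarrow> complex" assume "\<phi> \<in> cdual TYPE('b)"
    then show "cmod (\<Lambda> (Blinfun \<phi>)) \<le> K * onorm \<phi>" using bound[of "Blinfun \<phi>"] by (simp add: norm_Blinfun_cdual)
  qed
qed

lemma subspace_Blinfun_compatible_cdual:
  fixes j1 :: "'a::complex_normed_vector \<Rightarrow> 'w" and j2 :: "'b::complex_normed_vector \<Rightarrow> 'w"
  shows "subspace (Blinfun ` compatible_cdual j1 j2)"
  unfolding subspace_def
proof (intro conjI ballI allI)
  have "Blinfun (\<lambda>y::'b. 0::complex) = 0"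
    by (rule blinfun_eqI) (simp add: blinfun_apply_Blinfun_cdual[OF cdual_zero_mem])
  then show "0 \<in> Blinfun ` compatible_cdual j1 j2"
    using compatible_cdual_zero_mem by (metis image_eqI)
next
  fix p q assume "p \<in> Blinfun ` compatible_cdual j1 j2" "q \<in> Blinfun ` compatible_cdual j1 j2"
  then obtain \<phi> \<phi>' where \<phi>: "\<phi> \<in> compatible_cdual j1 j2" "\<phi>' \<in> compatible_cdual j1 j2"
    "p = Blinfun \<phi>" "q = Blinfun \<phi>'" by blast
  moreover have "\<phi> \<in> cdual TYPE('b)" "\<phi>' \<in> cdual TYPE('b)"
    using \<phi>(1,2) compatible_cdual_subset_cdual by blast+
  ultimately have "p + q = Blinfun (\<lambda>y. \<phi> y + \<phi>' y)" by (simp add: Blinfun_cdual_add)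
  then show "p + q \<in> Blinfun ` compatible_cdual j1 j2"
    by (rule image_eqI[OF _ compatible_cdual_add_mem[OF \<phi>(1,2)]])
next
  fix c :: real and p assume "p \<in> Blinfun ` compatible_cdual j1 j2"
  then obtain \<phi> where \<phi>: "\<phi> \<in> compatible_cdual j1 j2" "p = Blinfun \<phi>" by blast
  moreover have "\<phi> \<in> cdual TYPE('b)" using \<phi>(1) compatible_cdual_subset_cdual by blast
  ultimately have "c *\<^sub>R p = Blinfun (\<lambda>y. of_real c * \<phi> y)"
    using Blinfun_cdual_mult[of \<phi> _ "of_real c"] by simp
  then show "c *\<^sub>R p \<in> Blinfun ` compatible_cdual j1 j2"
    by (rule image_eqI[OF _ compatible_cdual_mult_mem[OF \<phi>(1)]])
qed

lemma imult_blinfun_Blinfun_compatible_cdual: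
  fixes j1 :: "'a::complex_normed_vector \<Rightarrow> 'w" and j2 :: "'b::complex_normed_vector \<Rightarrow> 'w"
  assumes "p \<in> Blinfun ` compatible_cdual j1 j2"
  shows "imult_blinfun p \<in> Blinfun ` compatible_cdual j1 j2"
proof -
  obtain \<phi> where \<phi>: "\<phi> \<in> compatible_cdual j1 j2" "p = Blinfun \<phi>" using assms by blast
  moreover have "\<phi> \<in> cdual TYPE('b)" using \<phi>(1) compatible_cdual_subset_cdual by blast
  ultimately have "imult_blinfun p = Blinfun (\<lambda>y. \<i> * \<phi> y)"
    using Blinfun_cdual_mult[of \<phi> _ \<i>] by simp
  then show ?thesis by (rule image_eqI[OF _ compatible_cdual_mult_mem[OF \<phi>(1)]])
qed

lemma compatible_cdual_dense:
  fixes j1 :: "'a::complex_banach \<Rightarrow> 'w::{complex_vector,t2_space}" and j2 :: "'b::complex_banach \<Rightarrow> 'w"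
  assumes j1: "continuous_inclusion j1" and j2: "continuous_inclusion j2"
    and refl: "creflexive TYPE('b)" and \<psi>: "\<psi> \<in> cdual TYPE('b)" and e: "e > 0"
  shows "\<exists>\<psi>'\<in>compatible_cdual j1 j2. onorm (\<lambda>y. \<psi>' y - \<psi> y) < e"
proof -
  define S where "S = Blinfun ` compatible_cdual j1 j2"
  have in_cdual: "\<phi> \<in> compatible_cdual j1 j2 \<Longrightarrow> \<phi> \<in> cdual TYPE('b)" for \<phi>
    using compatible_cdual_subset_cdual by blast
  define M where "M = closure S"
  have "subspace M" unfolding M_def S_def by (rule subspace_closure[OF subspace_Blinfun_compatible_cdual])
  have "imult_blinfun ` M \<subseteq> closure (imult_blinfun ` S)"
    unfolding M_def by (rule closure_bounded_linear_image_subset[OF bounded_linear_imult_blinfun])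
  also have "\<dots> \<subseteq> M"
    unfolding M_def S_def using imult_blinfun_Blinfun_compatible_cdual by (intro closure_mono) blast
  finally have imult_M: "imult_blinfun m \<in> M" if "m \<in> M" for m using that by blast
  have "Blinfun \<psi> \<in> M"
  proof (rule ccontr)
    assume notin: "Blinfun \<psi> \<notin> M"
    have "closed M" unfolding M_def by simp
    from separating_functional_complex[OF \<open>subspace M\<close> this notin linear_imult_blinfun
        imult_blinfun_imult_blinfun norm_imult_blinfun imult_M]
    obtain \<Lambda> :: "('b \<Rightarrow>\<^sub>L complex) \<Rightarrow> complex" where \<Lambda>: "linear \<Lambda>"
      "\<And>x. \<Lambda> (imult_blinfun x) = \<i> * \<Lambda> x" "Re (\<Lambda> (Blinfun \<psi>)) = 1" "\<And>m. m \<in> M \<Longrightarrow> \<Lambda> m = 0"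
      "\<And>x. cmod (\<Lambda> x) \<le> (1 + 1) * norm x / infdist (Blinfun \<psi>) M"
      by blast
    have \<Lambda>_bound: "cmod (\<Lambda> x) \<le> 2 / infdist (Blinfun \<psi>) M * norm x" for x
      using \<Lambda>(5)[of x] by simp
    obtain y where y: "\<And>\<phi>. \<phi> \<in> cdual TYPE('b) \<Longrightarrow> \<Lambda> (Blinfun \<phi>) = \<phi> y"
      using creflexive_represents_blinfun_functional[OF refl \<Lambda>(1,2) \<Lambda>_bound] by blast
    have "\<phi> y = 0" if "\<phi> \<in> compatible_cdual j1 j2" for \<phi>
    proof -
      have "Blinfun \<phi> \<in> S" unfolding S_def using that by (rule imageI)
      then have "Blinfun \<phi> \<in> M" unfolding M_def using closure_subset by blast
      then show ?thesis using y[OF in_cdual[OF that]] \<Lambda>(4) by simp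
    qed
    then have "y = 0" by (rule compatible_cdual_separates[OF j1 j2])
    moreover have "\<psi> 0 = 0" using \<psi> by (simp add: cdual_iff clinear_0)
    ultimately show False using \<Lambda>(3) y[OF \<psi>] by simp
  qed
  then obtain \<psi>' where \<psi>': "\<psi>' \<in> compatible_cdual j1 j2" "dist (Blinfun \<psi>') (Blinfun \<psi>) < e"
    unfolding M_def S_def closure_approachable using e by blast
  have "(\<lambda>y. \<psi>' y - \<psi> y) \<in> cdual TYPE('b)"
    using cdual_add_mem[OF in_cdual[OF \<psi>'(1)] cdual_mult_mem[OF \<psi>, of "-1"]] by simp
  then have "dist (Blinfun \<psi>') (Blinfun \<psi>) = onorm (\<lambda>y. \<psi>' y - \<psi> y)"
    unfolding dist_norm Blinfun_cdual_diff[OF in_cdual[OF \<psi>'(1)] \<psi>] by (rule norm_Blinfun_cdual)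
  with \<psi>' show ?thesis by auto
qed

section \<open>Extension from the intersection\<close>

lemma clinear_if_continuous_and_clinear_on_dense:
  fixes G :: "'a::complex_normed_vector \<Rightarrow> 'b::complex_normed_vector" and D :: "'a set"
  assumes cont: "continuous_on UNIV G" and dense: "closure D = UNIV"
    and D_add: "\<And>x y. x \<in> D \<Longrightarrow> y \<in> D \<Longrightarrow> x + y \<in> D"
    and D_scaleC: "\<And>c x. x \<in> D \<Longrightarrow> scaleC c x \<in> D"
    and G_add: "\<And>x y. x \<in> D \<Longrightarrow> y \<in> D \<Longrightarrow> G (x + y) = G x + G y"
    and G_scaleC: "\<And>c x. x \<in> D \<Longrightarrow> G (scaleC c x) = scaleC c (G x)"
  shows "clinear G"
  unfolding clinear_def
proof (intro conjI allI)
  have G_tendsto: "(\<lambda>n. G (u n)) \<longlonglongrightarrow> G x" if "u \<longlonglongrightarrow> x" for u x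
    using that continuous_on_tendsto_compose[OF cont] by auto
  have approx: "\<exists>u. (\<forall>n. u n \<in> D) \<and> u \<longlonglongrightarrow> x" for x
    using closure_sequential[of x D] dense by simp
  fix x y
  obtain u v where u: "\<And>n. u n \<in> D" "u \<longlonglongrightarrow> x" and v: "\<And>n. v n \<in> D" "v \<longlonglongrightarrow> y"
    using approx by metis
  have "(\<lambda>n. G (u n + v n)) \<longlonglongrightarrow> G (x + y)" by (intro G_tendsto tendsto_add u v)
  moreover have "(\<lambda>n. G (u n + v n)) \<longlonglongrightarrow> G x + G y"
    using tendsto_add[OF G_tendsto[OF u(2)] G_tendsto[OF v(2)]] by (simp add: G_add u v)
  ultimately show "G (x + y) = G x + G y" by (rule LIMSEQ_unique)
  fix c
  have "(\<lambda>n. G (scaleC c (u n))) \<longlonglongrightarrow> G (scaleC c x)"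
    by (intro G_tendsto bounded_linear.tendsto[OF bounded_linear_scaleC] u)
  moreover have "(\<lambda>n. G (scaleC c (u n))) \<longlonglongrightarrow> scaleC c (G x)"
    using bounded_linear.tendsto[OF bounded_linear_scaleC G_tendsto[OF u(2)]] by (simp add: G_scaleC u)
  ultimately show "G (scaleC c x) = scaleC c (G x)" by (rule LIMSEQ_unique)
qed

lemma bounded_clinear_extension_from_dense:
  fixes T :: "'a::complex_normed_vector \<Rightarrow> 'b::complex_banach" and D :: "'a set"
  assumes dense: "closure D = UNIV"
    and D_add: "\<And>x y. x \<in> D \<Longrightarrow> y \<in> D \<Longrightarrow> x + y \<in> D"
    and D_scaleC: "\<And>c x. x \<in> D \<Longrightarrow> scaleC c x \<in> D"
    and T_add: "\<And>x y. x \<in> D \<Longrightarrow> y \<in> D \<Longrightarrow> T (x + y) = T x + T y"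
    and T_scaleC: "\<And>c x. x \<in> D \<Longrightarrow> T (scaleC c x) = scaleC c (T x)"
    and T_bound: "\<And>x. x \<in> D \<Longrightarrow> norm (T x) \<le> C * norm x" and C: "C \<ge> 0"
  shows "\<exists>G. bounded_linear G \<and> clinear G \<and> (\<forall>x\<in>D. G x = T x) \<and> (\<forall>x. norm (G x) \<le> C * norm x)"
proof -
  have T_diff: "T (x - y) = T x - T y" if "x \<in> D" "y \<in> D" for x y
    using T_add[OF that(1) D_scaleC[OF that(2), of "-1"]] T_scaleC[OF that(2), of "-1"]
    by (simp add: scaleC_minus_one)
  have "C-lipschitz_on D T"
  proof (rule lipschitz_onI[OF _ C])
    fix x y assume "x \<in> D" "y \<in> D"
    then show "dist (T x) (T y) \<le> C * dist x y"
      using T_bound[OF D_add[OF \<open>x \<in> D\<close> D_scaleC[OF \<open>y \<in> D\<close>, of "-1"]]]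
      by (simp add: dist_norm T_diff scaleC_minus_one)
  qed
  from uniformly_continuous_on_extension_on_closure[OF lipschitz_on_uniformly_continuous[OF this]]
  obtain G where G_cont: "uniformly_continuous_on UNIV G" and G_T: "\<And>x. x \<in> D \<Longrightarrow> T x = G x"
    unfolding dense by metis
  have cont: "continuous_on UNIV G" using G_cont by (rule uniformly_continuous_imp_continuous)
  have "clinear G"
    using clinear_if_continuous_and_clinear_on_dense[OF cont dense D_add D_scaleC]
    by (simp add: G_T[symmetric] D_add D_scaleC T_add T_scaleC)
  have G_bound: "norm (G x) \<le> C * norm x" for x
  proof -
    obtain u where u: "\<And>n. u n \<in> D" "u \<longlonglongrightarrow> x"
      using closure_sequential[of x D] dense by auto
    show ?thesis
    proof (rule LIMSEQ_le)
      show "(\<lambda>n. norm (G (u n))) \<longlonglongrightarrow> norm (G x)"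
        using continuous_on_tendsto_compose[OF cont u(2)] by (intro tendsto_norm) simp
      show "(\<lambda>n. C * norm (u n)) \<longlonglongrightarrow> C * norm x" by (intro tendsto_mult tendsto_const tendsto_norm u)
      show "\<exists>N. \<forall>n\<ge>N. norm (G (u n)) \<le> C * norm (u n)" using T_bound u by (simp add: G_T)
    qed
  qed
  have "bounded_linear G"
    using \<open>clinear G\<close> G_bound
    by (intro bounded_linear_intro[where K=C])
      (simp_all add: clinear_add clinear_scaleC scaleR_scaleC mult.commute)
  with \<open>clinear G\<close> G_T G_bound show ?thesis by auto
qed

lemma range_preimage_add:
  assumes "clinear j1" "clinear j2" "j2 x \<in> range j1" "j2 y \<in> range j1"
  shows "j2 (x + y) \<in> range j1"
proof -
  obtain a b where "j2 x = j1 a" "j2 y = j1 b" using assms(3,4) by blast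
  then have "j2 (x + y) = j1 (a + b)" using assms(1,2) by (simp add: clinear_add)
  then show ?thesis by simp
qed

lemma range_preimage_scaleC:
  assumes "clinear j1" "clinear j2" "j2 x \<in> range j1"
  shows "j2 (scaleC c x) \<in> range j1"
proof -
  obtain a where "j2 x = j1 a" using assms(3) by blast
  then have "j2 (scaleC c x) = j1 (scaleC c a)" using assms(1,2) by (simp add: clinear_scaleC)
  then show ?thesis by simp
qed

lemma compatible_map_exists:
  fixes jX1 :: "'x1 \<Rightarrow> 'v" and jX2 :: "'x2::real_normed_vector \<Rightarrow> 'v"
    and jY1 :: "'y1 \<Rightarrow> 'w" and jY2 :: "'y2::real_normed_vector \<Rightarrow> 'w" and F :: "'x1 \<Rightarrow> 'y1"
  assumes jX1: "inj jX1" and jY2: "inj jY2"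
    and bound: "\<And>a b. jX1 a = jX2 b \<Longrightarrow> \<exists>c. jY1 (F a) = jY2 c \<and> norm c \<le> C * norm b"
  obtains T where "\<And>a b. jX1 a = jX2 b \<Longrightarrow> jY1 (F a) = jY2 (T b) \<and> norm (T b) \<le> C * norm b"
proof
  define T where "T b = (THE c. \<exists>a. jX1 a = jX2 b \<and> jY1 (F a) = jY2 c)" for b
  fix a b assume ab: "jX1 a = jX2 b"
  obtain c where c: "jY1 (F a) = jY2 c" "norm c \<le> C * norm b" using bound[OF ab] by blast
  have "T b = c" unfolding T_def
  proof (rule the_equality)
    show "\<exists>a. jX1 a = jX2 b \<and> jY1 (F a) = jY2 c" using ab c by blast
    fix c' assume "\<exists>a. jX1 a = jX2 b \<and> jY1 (F a) = jY2 c'"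
    then obtain a' where a': "jX1 a' = jX2 b" "jY1 (F a') = jY2 c'" by blast
    from a'(1) ab have "a' = a" by (metis injD[OF jX1])
    with a'(2) c(1) show "c' = c" by (metis injD[OF jY2])
  qed
  with c show "jY1 (F a) = jY2 (T b) \<and> norm (T b) \<le> C * norm b" by simp
qed

lemma compatible_operator_extension:
  fixes jX1 :: "'x1::complex_banach \<Rightarrow> 'v::{complex_vector,t2_space}" and jX2 :: "'x2::complex_banach \<Rightarrow> 'v"
    and jY1 :: "'y1::complex_banach \<Rightarrow> 'w::{complex_vector,t2_space}" and jY2 :: "'y2::complex_banach \<Rightarrow> 'w"
    and F :: "'x1 \<Rightarrow>\<^sub>L 'y1"
  assumes incl: "continuous_inclusion jX1" "continuous_inclusion jX2"
      "continuous_inclusion jY1" "continuous_inclusion jY2"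
    and dense: "closure {b. jX2 b \<in> range jX1} = UNIV"
    and F_lin: "clinear (blinfun_apply F)"
    and bound: "\<And>a b. jX1 a = jX2 b \<Longrightarrow> \<exists>c. jY1 (blinfun_apply F a) = jY2 c \<and> norm c \<le> C * norm b"
    and C: "C \<ge> 0"
  shows "\<exists>G :: 'x2 \<Rightarrow>\<^sub>L 'y2. clinear (blinfun_apply G) \<and> norm G \<le> C \<and>
           (\<forall>a b. jX1 a = jX2 b \<longrightarrow> jY2 (blinfun_apply G b) = jY1 (blinfun_apply F a))"
proof -
  have jX: "clinear jX1" "inj jX1" "clinear jX2" and jY: "clinear jY1" "clinear jY2" "inj jY2"
    using incl unfolding continuous_inclusion_def by auto
  obtain T where T: "\<And>a b. jX1 a = jX2 b \<Longrightarrow> jY1 (blinfun_apply F a) = jY2 (T b) \<and> norm (T b) \<le> C * norm b"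
    using compatible_map_exists[of jX1 jY2 jX2 jY1 "blinfun_apply F" C, OF jX(2) jY(3) bound] by blast
  let ?D = "{b. jX2 b \<in> range jX1}"
  have "\<exists>G. bounded_linear G \<and> clinear G \<and> (\<forall>x\<in>?D. G x = T x) \<and> (\<forall>x. norm (G x) \<le> C * norm x)"
  proof (rule bounded_clinear_extension_from_dense[OF dense _ _ _ _ _ C])
    fix x y assume "x \<in> ?D" "y \<in> ?D"
    then obtain a1 a2 where a: "jX1 a1 = jX2 x" "jX1 a2 = jX2 y" by (auto simp: eq_commute)
    then have "jX1 (a1 + a2) = jX2 (x + y)" using jX by (simp add: clinear_add)
    then have "jY2 (T (x + y)) = jY1 (blinfun_apply F (a1 + a2))" using T by simp
    also have "\<dots> = jY2 (T x + T y)"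
      using T[OF a(1)] T[OF a(2)] jY by (simp add: blinfun.add_right clinear_add)
    finally show "T (x + y) = T x + T y" by (rule injD[OF jY(3)])
    show "x + y \<in> ?D" using \<open>x \<in> ?D\<close> \<open>y \<in> ?D\<close> jX by (simp add: range_preimage_add)
  next
    fix c x assume "x \<in> ?D"
    then obtain a where a: "jX1 a = jX2 x" by (auto simp: eq_commute)
    then have "jX1 (scaleC c a) = jX2 (scaleC c x)" using jX by (simp add: clinear_scaleC)
    then have "jY2 (T (scaleC c x)) = jY1 (blinfun_apply F (scaleC c a))" using T by simp
    also have "\<dots> = jY2 (scaleC c (T x))" using T[OF a] F_lin jY by (simp add: clinear_scaleC)
    finally show "T (scaleC c x) = scaleC c (T x)" by (rule injD[OF jY(3)])
    show "scaleC c x \<in> ?D" using \<open>x \<in> ?D\<close> jX by (simp add: range_preimage_scaleC)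
    show "norm (T x) \<le> C * norm x" using T[OF a] by blast
  qed
  then obtain G where G: "bounded_linear G" "clinear G" "\<And>x. x \<in> ?D \<Longrightarrow> G x = T x"
    "\<And>x. norm (G x) \<le> C * norm x" by blast
  have G_apply: "blinfun_apply (Blinfun G) = G" using G(1) by (rule bounded_linear_Blinfun_apply)
  have "norm (Blinfun G) \<le> C" using G(4) C by (intro norm_blinfun_bound) (simp_all add: G_apply mult.commute)
  moreover have "jY2 (G b) = jY1 (blinfun_apply F a)" if "jX1 a = jX2 b" for a b
    using T[OF that] G(3)[of b] that by (metis mem_Collect_eq rangeI)
  ultimately show ?thesis using G(2) by (intro exI[of _ "Blinfun G"]) (simp add: G_apply)
qed

section \<open>Weak holomorphy of the extension\<close>

lemma holomorphic_on_uniformly_approximable: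
  assumes U: "open U"
    and approx: "\<And>e. e > 0 \<Longrightarrow> \<exists>h. h holomorphic_on U \<and> (\<forall>z\<in>U. dist (h z) (k z) \<le> e)"
  shows "k holomorphic_on U"
proof -
  obtain h where h: "\<And>n. h n holomorphic_on U" "\<And>n z. z \<in> U \<Longrightarrow> dist (h n z) (k z) \<le> 1 / Suc n"
    using approx[of "1 / Suc _"] by (metis of_nat_0_less_iff zero_less_Suc zero_less_divide_1_iff)
  have "uniform_limit U h k sequentially"
    unfolding uniform_limit_iff
  proof (intro allI impI)
    fix e :: real assume "e > 0"
    then obtain N where N: "1 / Suc N < e" by (metis nat_approx_posE)
    show "\<forall>\<^sub>F n in sequentially. \<forall>z\<in>U. dist (h n z) (k z) < e"
    proof (rule eventually_sequentiallyI[of N], intro ballI)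
      fix n z assume "N \<le> n" "z \<in> U"
      have "1 / real (Suc n) \<le> 1 / Suc N" using \<open>N \<le> n\<close> by (simp add: frac_le)
      then show "dist (h n z) (k z) < e" using h(2)[OF \<open>z \<in> U\<close>, of n] N by linarith
    qed
  qed
  show ?thesis
  proof (rule holomorphic_uniform_sequence[OF U h(1)])
    fix z assume "z \<in> U"
    then obtain d where "d > 0" "cball z d \<subseteq> U" using U open_contains_cball by blast
    with \<open>uniform_limit U h k sequentially\<close>
    show "\<exists>d>0. cball z d \<subseteq> U \<and> uniform_limit (cball z d) h k sequentially"
      by (blast intro: uniform_limit_on_subset)
  qed
qed

lemma cdual_blinfun_apply_dist_le:
  fixes G :: "'a::real_normed_vector \<Rightarrow>\<^sub>L 'b::complex_normed_vector"
  assumes \<psi>: "\<psi> \<in> cdual TYPE('b)" and \<psi>': "\<psi>' \<in> cdual TYPE('b)" and G: "norm G \<le> C"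
  shows "dist (\<psi>' (blinfun_apply G b)) (\<psi> (blinfun_apply G x))
           \<le> onorm (\<lambda>y. \<psi>' y - \<psi> y) * (C * norm b) + onorm \<psi> * (C * norm (b - x))"
proof -
  have diff: "(\<lambda>y. \<psi>' y - \<psi> y) \<in> cdual TYPE('b)"
    using cdual_add_mem[OF \<psi>' cdual_mult_mem[OF \<psi>, of "-1"]] by simp
  have G_le: "norm (blinfun_apply G v) \<le> C * norm v" for v
    using norm_blinfun[of G v] G by (meson mult_right_mono norm_ge_zero order_trans)
  have "dist (\<psi>' (blinfun_apply G b)) (\<psi> (blinfun_apply G x))
        = cmod ((\<psi>' (blinfun_apply G b) - \<psi> (blinfun_apply G b)) + \<psi> (blinfun_apply G (b - x)))"
    using \<psi> by (simp add: dist_norm blinfun.diff_right cdual_diff)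
  also have "\<dots> \<le> onorm (\<lambda>y. \<psi>' y - \<psi> y) * (C * norm b) + onorm \<psi> * (C * norm (b - x))"
  proof (rule order_trans[OF norm_triangle_ineq add_mono])
    show "cmod (\<psi>' (blinfun_apply G b) - \<psi> (blinfun_apply G b)) \<le> onorm (\<lambda>y. \<psi>' y - \<psi> y) * (C * norm b)"
      using cdual_norm_le[OF diff, of "blinfun_apply G b"]
        mult_left_mono[OF G_le[of b] cdual_onorm_nonneg[OF diff]] by simp
    show "cmod (\<psi> (blinfun_apply G (b - x))) \<le> onorm \<psi> * (C * norm (b - x))"
      using cdual_norm_le[OF \<psi>, of "blinfun_apply G (b - x)"]
        mult_left_mono[OF G_le[of "b - x"] cdual_onorm_nonneg[OF \<psi>]] by simp
  qed
  finally show ?thesis .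
qed

lemma compatible_cdual_apply_holomorphic:
  fixes jX1 :: "'x1::complex_normed_vector \<Rightarrow> 'v" and jX2 :: "'x2::real_normed_vector \<Rightarrow> 'v"
    and jY1 :: "'y1::complex_normed_vector \<Rightarrow> 'w" and jY2 :: "'y2::complex_normed_vector \<Rightarrow> 'w"
    and f :: "complex \<Rightarrow> ('x1 \<Rightarrow>\<^sub>L 'y1)" and g :: "complex \<Rightarrow> ('x2 \<Rightarrow>\<^sub>L 'y2)"
  assumes \<psi>: "\<psi> \<in> compatible_cdual jY1 jY2" and f_hol: "op_holomorphic_on f U"
    and g_compat: "\<And>z a b. z \<in> U \<Longrightarrow> jX1 a = jX2 b \<Longrightarrow> jY2 (blinfun_apply (g z) b) = jY1 (blinfun_apply (f z) a)"
    and ab: "jX1 a = jX2 b"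
  shows "(\<lambda>z. \<psi> (blinfun_apply (g z) b)) holomorphic_on U"
proof -
  obtain \<theta> where \<theta>: "\<theta> \<in> cdual TYPE('y1)" "\<And>a b. jY1 a = jY2 b \<Longrightarrow> \<psi> b = \<theta> a"
    using \<psi> unfolding compatible_cdual_def by blast
  show ?thesis
  proof (rule holomorphic_transform[OF op_holomorphic_on_cdual_apply[OF f_hol \<theta>(1), of a]])
    fix z assume "z \<in> U"
    then show "\<theta> (blinfun_apply (f z) a) = \<psi> (blinfun_apply (g z) b)"
      using \<theta>(2) g_compat[OF _ ab] by metis
  qed
qed

lemma compatible_family_weakly_holomorphic:
  fixes jX1 :: "'x1::complex_banach \<Rightarrow> 'v::{complex_vector,t2_space}" and jX2 :: "'x2::complex_banach \<Rightarrow> 'v"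
    and jY1 :: "'y1::complex_banach \<Rightarrow> 'w::{complex_vector,t2_space}" and jY2 :: "'y2::complex_banach \<Rightarrow> 'w"
    and f :: "complex \<Rightarrow> ('x1 \<Rightarrow>\<^sub>L 'y1)" and g :: "complex \<Rightarrow> ('x2 \<Rightarrow>\<^sub>L 'y2)"
  assumes inclY: "continuous_inclusion jY1" "continuous_inclusion jY2"
    and dense: "closure {b. jX2 b \<in> range jX1} = UNIV"
    and refl: "creflexive TYPE('y2)" and U: "open U"
    and f_hol: "op_holomorphic_on f U"
    and C: "C \<ge> 0" and g_bound: "\<And>z. z \<in> U \<Longrightarrow> norm (g z) \<le> C"
    and g_compat: "\<And>z a b. z \<in> U \<Longrightarrow> jX1 a = jX2 b \<Longrightarrow> jY2 (blinfun_apply (g z) b) = jY1 (blinfun_apply (f z) a)"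
    and \<psi>: "\<psi> \<in> cdual TYPE('y2)"
  shows "(\<lambda>z. \<psi> (blinfun_apply (g z) x)) holomorphic_on U"
proof (rule holomorphic_on_uniformly_approximable[OF U])
  fix e :: real assume e: "e > 0"
  define K where "K = onorm \<psi> * C + 1"
  have "0 \<le> onorm \<psi> * C" using cdual_onorm_nonneg[OF \<psi>] C by simp
  then have K: "K > 0" unfolding K_def by linarith
  have "x \<in> closure {b. jX2 b \<in> range jX1}" using dense by simp
  moreover have "e / (2 * K) > 0" using e K by simp
  ultimately obtain b where b: "jX2 b \<in> range jX1" "dist b x < e / (2 * K)"
    unfolding closure_approachable by blast
  then obtain a where ab: "jX1 a = jX2 b" by auto
  define K' where "K' = C * norm b + 1"
  have K': "K' > 0" unfolding K'_def using C by (simp add: add_nonneg_pos)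
  then have "e / (2 * K') > 0" using e by simp
  then obtain \<psi>' where \<psi>': "\<psi>' \<in> compatible_cdual jY1 jY2" "onorm (\<lambda>y. \<psi>' y - \<psi> y) < e / (2 * K')"
    using compatible_cdual_dense[OF inclY refl \<psi>] by blast
  have "dist (\<psi>' (blinfun_apply (g z) b)) (\<psi> (blinfun_apply (g z) x)) \<le> e" if z: "z \<in> U" for z
  proof -
    have "\<psi>' \<in> cdual TYPE('y2)" using \<psi>'(1) compatible_cdual_subset_cdual by blast
    have "onorm (\<lambda>y. \<psi>' y - \<psi> y) * (C * norm b) \<le> e / (2 * K') * K'"
      using \<psi>'(2) cdual_onorm_nonneg[OF \<psi>] e K' C unfolding K'_def
      by (intro mult_mono) (auto intro: order_trans[OF _ onorm_pos_le])
    moreover have "onorm \<psi> * (C * norm (b - x)) \<le> K * (e / (2 * K))"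
      using b(2) cdual_onorm_nonneg[OF \<psi>] C K unfolding K_def
      by (simp only: mult.assoc[symmetric], intro mult_mono) (auto simp: dist_norm)
    ultimately have "onorm (\<lambda>y. \<psi>' y - \<psi> y) * (C * norm b) + onorm \<psi> * (C * norm (b - x)) \<le> e"
      using K K' by simp
    with cdual_blinfun_apply_dist_le[OF \<psi> \<open>\<psi>' \<in> cdual TYPE('y2)\<close> g_bound[OF z], where b = b and x = x]
    show ?thesis by linarith
  qed
  with compatible_cdual_apply_holomorphic[of \<psi>' jY1 jY2 f U jX1 jX2 g a b, OF \<psi>'(1) f_hol g_compat ab]
  show "\<exists>h. h holomorphic_on U \<and> (\<forall>z\<in>U. dist (h z) (\<psi> (blinfun_apply (g z) x)) \<le> e)" by blast
qed

theorem lemma10p1: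
  fixes jX1 :: "'x1::complex_banach \<Rightarrow> 'v::{complex_vector,t2_space}"
    and jX2 :: "'x2::complex_banach \<Rightarrow> 'v"
    and jY1 :: "'y1::complex_banach \<Rightarrow> 'w::{complex_vector,t2_space}"
    and jY2 :: "'y2::complex_banach \<Rightarrow> 'w"
    and f :: "complex \<Rightarrow> ('x1 \<Rightarrow>\<^sub>L 'y1)"
    and U :: "complex set"
    and C :: real
  assumes tvs: "complex_tvs TYPE('v)" "complex_tvs TYPE('w)"
    and incl: "continuous_inclusion jX1" "continuous_inclusion jX2"
      "continuous_inclusion jY1" "continuous_inclusion jY2"
    and denseX1: "closure {a. jX1 a \<in> range jX2} = UNIV"
    and denseX2: "closure {b. jX2 b \<in> range jX1} = UNIV"
    and denseY1: "closure {a. jY1 a \<in> range jY2} = UNIV"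
    and denseY2: "closure {b. jY2 b \<in> range jY1} = UNIV"
    and refl: "creflexive TYPE('y2)"
    and O_open: "open U"
    and f_lin: "\<forall>z\<in>U. clinear (blinfun_apply (f z))"
    and f_hol: "op_holomorphic_on f U"
    and bound: "\<forall>z\<in>U. \<forall>a b. jX1 a = jX2 b \<longrightarrow>
                  (\<exists>c. jY1 (blinfun_apply (f z) a) = jY2 c \<and> norm c \<le> C * norm b)"
  shows "\<exists>g :: complex \<Rightarrow> ('x2 \<Rightarrow>\<^sub>L 'y2).
           (\<forall>z\<in>U. clinear (blinfun_apply (g z)) \<and>
              (\<forall>a b. jX1 a = jX2 b \<longrightarrow> jY2 (blinfun_apply (g z) b) = jY1 (blinfun_apply (f z) a)))
           \<and> op_holomorphic_on g U"
proof -
  define C' where "C' = max C 0"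
  have "\<exists>G :: 'x2 \<Rightarrow>\<^sub>L 'y2. clinear (blinfun_apply G) \<and> norm G \<le> C' \<and>
          (\<forall>a b. jX1 a = jX2 b \<longrightarrow> jY2 (blinfun_apply G b) = jY1 (blinfun_apply (f z) a))"
    if z: "z \<in> U" for z
  proof (rule compatible_operator_extension[OF incl denseX2])
    show "clinear (blinfun_apply (f z))" using f_lin z by blast
    fix a b assume "jX1 a = jX2 b"
    then obtain c where "jY1 (blinfun_apply (f z) a) = jY2 c" "norm c \<le> C * norm b" using bound z by blast
    moreover have "C * norm b \<le> C' * norm b" unfolding C'_def by (simp add: mult_right_mono)
    ultimately show "\<exists>c. jY1 (blinfun_apply (f z) a) = jY2 c \<and> norm c \<le> C' * norm b" by force
  qed (simp add: C'_def)
  then obtain g :: "complex \<Rightarrow> ('x2 \<Rightarrow>\<^sub>L 'y2)" where g: "\<And>z. z \<in> U \<Longrightarrow>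
      clinear (blinfun_apply (g z)) \<and> norm (g z) \<le> C' \<and>
      (\<forall>a b. jX1 a = jX2 b \<longrightarrow> jY2 (blinfun_apply (g z) b) = jY1 (blinfun_apply (f z) a))"
    by metis
  have "op_holomorphic_on g U"
  proof (rule op_holomorphic_onI_weakly_holomorphic[OF refl O_open])
    show "norm (g z) \<le> C'" "clinear (blinfun_apply (g z))" if "z \<in> U" for z using g[OF that] by blast+
    show "(\<lambda>z. \<phi> (blinfun_apply (g z) x)) holomorphic_on U" if "\<phi> \<in> cdual TYPE('y2)" for \<phi> x
    proof (rule compatible_family_weakly_holomorphic[OF incl(3,4) denseX2 refl O_open f_hol _ _ _ that])
      show "0 \<le> C'" by (simp add: C'_def)
    qed (use g in auto)
  qed
  with g show ?thesis by blast
qed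

end
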